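(* For $|q|<1$, \[ \sum_{i,j\geq 0}\frac{q^{\frac{i(3i-1)}{2}+4ij+4j^2}}{(q;q)_i (q^2;q^2)_j} =\frac{1}{(q,q^4;q^5)_\infty},\qquad \sum_{i,j\geq 0}\frac{q^{\frac{i(3i+1)}{2}+4ij+4j^2+2j}}{(q;q)_i(q^2;q^2)_j}=\frac{1}{(q^2,q^3;q^5)_\infty}. \]
   Context: For $|q|<1$: $(a;q)_0=1$, $(a;q)_n=\prod_{k=0}^{n-1}(1-aq^k)$, $(a;q)_\infty=\prod_{k\ge0}(1-aq^k)$, $(a_1,\dots,a_m;q)_n=\prod_\ell(a_\ell;q)_n$. *)

theory Defs
  imports "HOL-Analysis.Analysis"
begin

definition qpoch :: "complex \<Rightarrow> complex \<Rightarrow> nat \<Rightarrow> complex" where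
  "qpoch a q n = (\<Prod>k<n. 1 - a * q ^ k)"

definition qpoch_inf :: "complex \<Rightarrow> complex \<Rightarrow> complex" where
  "qpoch_inf a q = (\<Prod>k. 1 - a * q ^ k)"

end

theory Submission
  imports Defs "HOL-Computational_Algebra.Formal_Power_Series"
begin

text \<open>
  Grouping the terms along \<open>n = i + 2 j\<close> reduces both double sums to the Rogers--Ramanujan
  series \<open>\<Sum>n. q^(n\<^sup>2) / (q;q)\<^sub>n\<close> and \<open>\<Sum>n. q^(n\<^sup>2+n) / (q;q)\<^sub>n\<close>, because
  \<open>\<Sum>\<^bsub>i+2j=n\<^esub> q^(i choose 2) / ((q;q)\<^sub>i (q\<^sup>2;q\<^sup>2)\<^sub>j) = 1 / (q;q)\<^sub>n\<close>: this compares
  coefficients in \<open>(-x;q)\<^sub>\<infinity> / (x\<^sup>2;q\<^sup>2)\<^sub>\<infinity> = 1 / (x;q)\<^sub>\<infinity>\<close> and is proved with formal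
  power series through their q-difference equations.

  The Rogers--Ramanujan identities are proved after Rogers and Selberg.
  \<open>G x = \<Sum>n. x^n q^(n\<^sup>2) / (q;q)\<^sub>n\<close> and Selberg's series \<open>J x\<close> both satisfy
  \<open>D x = D (x q) + x q D (x q\<^sup>2)\<close> and \<open>D x = 1 + O(x)\<close>, which forces \<open>J = G\<close>; at \<open>x = 1\<close>
  and \<open>x = q\<close> Selberg's series is \<open>1 / (q;q)\<^sub>\<infinity>\<close> times a Jacobi triple product in base
  \<open>q\<^sup>5\<close>, which is in turn derived from Euler's expansions of \<open>(a;q)\<^sub>\<infinity>\<close> and
  \<open>1 / (a;q)\<^sub>\<infinity>\<close>.
\<close>

section \<open>Finite and infinite q-Pochhammer symbols\<close>

lemma qpoch_0 [simp]: "qpoch a q 0 = 1"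
  by (simp add: qpoch_def)

lemma qpoch_Suc: "qpoch a q (Suc n) = qpoch a q n * (1 - a * q ^ n)"
  by (simp add: qpoch_def)

lemma qpoch_add: "qpoch a q (m + n) = qpoch a q m * qpoch (a * q ^ m) q n"
  by (induction n) (auto simp: qpoch_Suc power_add mult_ac)

lemma norm_mult_power_less_one:
  fixes a q :: complex
  assumes "norm a < 1" "norm q \<le> 1"
  shows "norm (a * q ^ k) < 1"
proof -
  have "norm (a * q ^ k) \<le> norm a"
    using assms by (simp add: norm_mult norm_power mult_left_le power_le_one)
  with assms show ?thesis by linarith
qed

lemma qpoch_nonzero:
  fixes a q :: complex
  assumes "norm a < 1" "norm q \<le> 1"
  shows "qpoch a q n \<noteq> 0"
proof -
  have "1 - a * q ^ k \<noteq> 0" for k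
    using norm_mult_power_less_one[OF assms, of k] by auto
  then show ?thesis by (simp add: qpoch_def)
qed

lemma convergent_prod_qpoch:
  fixes a q :: complex
  assumes "norm q < 1"
  shows "convergent_prod (\<lambda>k. 1 - a * q ^ k)"
proof -
  have "summable (\<lambda>k. norm a * norm q ^ k)"
    using assms by (intro summable_mult summable_geometric) simp
  then have "summable (\<lambda>k. norm ((1 - a * q ^ k) - 1))"
    by (simp add: norm_mult norm_power)
  then show ?thesis
    by (intro abs_convergent_prod_imp_convergent_prod summable_imp_abs_convergent_prod)
qed

lemma qpoch_inf_has_prod:
  "norm (q::complex) < 1 \<Longrightarrow> (\<lambda>k. 1 - a * q ^ k) has_prod qpoch_inf a q"
  unfolding qpoch_inf_def using convergent_prod_has_prod convergent_prod_qpoch by blast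

lemma qpoch_LIMSEQ:
  fixes q :: complex
  assumes "norm q < 1"
  shows "(\<lambda>n. qpoch a q n) \<longlonglongrightarrow> qpoch_inf a q"
proof -
  have "(\<lambda>n. qpoch a q (Suc n)) \<longlonglongrightarrow> qpoch_inf a q"
    using convergent_prod_LIMSEQ[OF convergent_prod_qpoch[OF assms]]
    by (simp add: qpoch_inf_def qpoch_def lessThan_Suc_atMost)
  then show ?thesis by (rule LIMSEQ_imp_Suc)
qed

lemma qpoch_inf_split:
  fixes q :: complex
  assumes "norm q < 1"
  shows "qpoch_inf a q = qpoch a q m * qpoch_inf (a * q ^ m) q"
proof -
  have "(\<lambda>n. qpoch a q (n + m)) \<longlonglongrightarrow> qpoch_inf a q"
    by (rule LIMSEQ_ignore_initial_segment[OF qpoch_LIMSEQ[OF assms]])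
  moreover have "(\<lambda>n. qpoch a q (n + m)) \<longlonglongrightarrow> qpoch a q m * qpoch_inf (a * q ^ m) q"
    unfolding add.commute[of _ m] qpoch_add by (intro tendsto_mult tendsto_const qpoch_LIMSEQ assms)
  ultimately show ?thesis by (rule LIMSEQ_unique)
qed

lemma qpoch_inf_nonzero:
  fixes a q :: complex
  assumes "norm a < 1" "norm q < 1"
  shows "qpoch_inf a q \<noteq> 0"
proof -
  have "1 - a * q ^ k \<noteq> 0" for k
    using norm_mult_power_less_one[OF assms(1), of q k] assms(2) by auto
  then show ?thesis
    unfolding qpoch_inf_def by (intro prodinf_nonzero convergent_prod_qpoch assms(2))
qed

lemma qpoch_inf_eq_0:
  fixes q :: complex
  assumes "norm q < 1" "a * q ^ k = 1"
  shows "qpoch_inf a q = 0"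
  using has_prod_zeroI[OF qpoch_inf_has_prod[OF assms(1)], where n=k] assms(2) by simp

lemma sum_lessThan_geometric_le:
  fixes M r :: real
  assumes "M \<ge> 0" "0 \<le> r" "r < 1"
  shows "(\<Sum>k<N. M * r ^ k) \<le> M / (1 - r)"
proof -
  have "(\<Sum>k<N. M * r ^ k) = M * (1 - r ^ N) / (1 - r)"
    using assms by (simp add: sum_gp_strict flip: sum_distrib_left)
  also have "\<dots> \<le> M / (1 - r)"
    using assms by (intro divide_right_mono mult_right_le_one_le) (auto simp: power_le_one)
  finally show ?thesis .
qed

lemma exp_neg_div_le_one_minus:
  fixes x :: real
  assumes "0 \<le> x" "x < 1"
  shows "exp (- (x / (1 - x))) \<le> 1 - x"
proof -
  have "1 \<le> (1 - x) * exp (x / (1 - x))"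
    using exp_ge_add_one_self[of "x / (1 - x)"] assms by (simp add: field_simps)
  then show ?thesis
    using assms by (simp add: exp_minus field_simps)
qed

lemma norm_qpoch_ge_exp:
  fixes a q :: complex
  assumes a: "norm a \<le> b" "b < 1" and q: "norm q \<le> r" "r < 1"
  shows "exp (- b / ((1 - b) * (1 - r))) \<le> norm (qpoch a q n)"
proof -
  have b0: "0 \<le> b" and r0: "0 \<le> r"
    using a q norm_ge_zero order_trans by blast+
  have factor: "exp (- (b / (1 - b) * r ^ k)) \<le> norm (1 - a * q ^ k)" for k
  proof -
    define x where "x = b * r ^ k"
    have x: "0 \<le> x" "x \<le> b"
      using b0 r0 q by (auto simp: x_def mult_left_le power_le_one)
    have "exp (- (b / (1 - b) * r ^ k)) \<le> exp (- (x / (1 - x)))"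
      using x a by (simp add: x_def frac_le)
    also have "\<dots> \<le> 1 - x"
      using x a by (intro exp_neg_div_le_one_minus) auto
    also have "\<dots> \<le> norm (1 - a * q ^ k)"
    proof -
      have "norm (a * q ^ k) \<le> x"
        unfolding x_def norm_mult norm_power using a q b0 by (intro mult_mono power_mono) auto
      then show ?thesis
        using norm_triangle_ineq2[of 1 "a * q ^ k"] by simp
    qed
    finally show ?thesis .
  qed
  have "(\<Sum>k<n. b / (1 - b) * r ^ k) \<le> b / (1 - b) / (1 - r)"
    using a b0 r0 q by (intro sum_lessThan_geometric_le) auto
  then have "exp (- b / ((1 - b) * (1 - r))) \<le> exp (- (\<Sum>k<n. b / (1 - b) * r ^ k))"
    by (simp add: field_simps)
  also have "\<dots> = (\<Prod>k<n. exp (- (b / (1 - b) * r ^ k)))"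
    by (simp add: exp_sum flip: sum_negf)
  also have "\<dots> \<le> (\<Prod>k<n. norm (1 - a * q ^ k))"
    by (intro prod_mono conjI factor) simp
  also have "\<dots> = norm (qpoch a q n)"
    by (simp add: qpoch_def prod_norm)
  finally show ?thesis .
qed

lemma norm_inverse_qpoch_le:
  fixes a q :: complex
  assumes "norm a \<le> norm q" "norm q < 1"
  shows "norm (1 / qpoch a q n) \<le> exp (norm q / (1 - norm q)\<^sup>2)"
proof -
  define c where "c = norm q / (1 - norm q)\<^sup>2"
  have "exp (- c) \<le> norm (qpoch a q n)"
    using norm_qpoch_ge_exp[OF assms(1,2) order_refl assms(2), of n]
    by (simp add: c_def power2_eq_square)
  then have "1 \<le> exp c * norm (qpoch a q n)"
    by (simp add: exp_minus field_simps)
  then show ?thesis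
    by (simp add: norm_divide divide_le_eq c_def mult.commute)
qed

lemma norm_inverse_qpoch_inf_le:
  fixes a q :: complex
  assumes "norm a \<le> norm q" "norm q < 1"
  shows "norm (1 / qpoch_inf a q) \<le> exp (norm q / (1 - norm q)\<^sup>2)"
proof -
  have "(\<lambda>n. norm (1 / qpoch a q n)) \<longlonglongrightarrow> norm (1 / qpoch_inf a q)"
    using qpoch_inf_nonzero[of a q] assms
    by (intro tendsto_norm tendsto_divide tendsto_const qpoch_LIMSEQ) auto
  then show ?thesis
    by (rule LIMSEQ_le_const2) (use norm_inverse_qpoch_le[OF assms] in auto)
qed

section \<open>Euler's identities\<close>

lemma power_power_commute: "(a ^ m) ^ n = (a ^ n) ^ m" for a :: "'a::monoid_mult"
  by (simp flip: power_mult add: mult.commute)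

lemma choose_two_Suc: "Suc n choose 2 = (n choose 2) + n"
  using binomial_Suc_Suc[of n 1] by (simp add: numeral_2_eq_2)

lemma summable_norm_geometric_bound:
  fixes f :: "nat \<Rightarrow> 'a::real_normed_vector"
  assumes "\<And>n. norm (f n) \<le> c * x ^ n" "0 \<le> x" "x < 1"
  shows "summable (\<lambda>n. norm (f n))"
  by (rule summable_comparison_test'[OF summable_mult[OF summable_geometric[of x]]])
    (use assms in auto)

lemma norm_suminf_le_geometric:
  fixes f :: "nat \<Rightarrow> 'a::banach"
  assumes le: "\<And>n. norm (f n) \<le> c * x ^ n" and x: "0 \<le> x" "x < 1"
  shows "norm (suminf f) \<le> c / (1 - x)"
proof -
  have geom: "summable (\<lambda>n. c * x ^ n)"
    using x by (intro summable_mult summable_geometric) auto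
  have "norm (suminf f) \<le> (\<Sum>n. norm (f n))"
    by (rule summable_norm[OF summable_norm_geometric_bound[OF le x]])
  also have "\<dots> \<le> (\<Sum>n. c * x ^ n)"
    by (rule suminf_le[OF le summable_norm_geometric_bound[OF le x] geom])
  also have "\<dots> = c / (1 - x)"
    using x by (simp add: suminf_mult suminf_geometric)
  finally show ?thesis .
qed

lemma norm_suminf_minus_head_le:
  fixes f :: "nat \<Rightarrow> 'a::banach"
  assumes "summable f" "\<And>n. norm (f (Suc n)) \<le> c * x ^ n" "0 \<le> x" "x < 1"
  shows "norm (suminf f - f 0) \<le> c / (1 - x)"
  using norm_suminf_le_geometric[of "\<lambda>n. f (Suc n)", OF assms(2-4)]
    suminf_split_head[OF assms(1)] by simp

lemma summable_power_mult_power_choose_two: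
  fixes x r :: real
  assumes "0 \<le> r" "r < 1"
  shows "summable (\<lambda>n. x ^ n * r ^ (n choose 2))"
proof -
  have "(\<lambda>n. \<bar>x\<bar> * r ^ n) \<longlonglongrightarrow> 0"
    using assms by (intro tendsto_mult_right_zero LIMSEQ_power_zero) auto
  then have "\<forall>\<^sub>F n in sequentially. \<bar>x\<bar> * r ^ n < 1/2"
    by (rule order_tendstoD) simp
  then obtain N where N: "\<And>n. n \<ge> N \<Longrightarrow> \<bar>x\<bar> * r ^ n < 1/2"
    by (auto simp: eventually_sequentially)
  show ?thesis
  proof (rule summable_ratio_test[of "1/2" N])
    fix n assume "n \<ge> N"
    have "norm (x ^ Suc n * r ^ (Suc n choose 2)) = (\<bar>x\<bar> * r ^ n) * norm (x ^ n * r ^ (n choose 2))"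
      using assms by (simp add: choose_two_Suc power_add abs_mult power_abs)
    also have "\<dots> \<le> 1/2 * norm (x ^ n * r ^ (n choose 2))"
      using N[OF \<open>n \<ge> N\<close>] by (intro mult_right_mono) auto
    finally show "norm (x ^ Suc n * r ^ (Suc n choose 2)) \<le> 1/2 * norm (x ^ n * r ^ (n choose 2))" .
  qed simp
qed

lemma LIMSEQ_along_qgeometric:
  fixes F :: "complex \<Rightarrow> complex"
  assumes p: "norm p < 1"
    and near0: "\<forall>\<^sub>F N in sequentially. norm (F (a * p ^ N) - 1) \<le> C * norm (a * p ^ N)"
  shows "(\<lambda>N. F (a * p ^ N)) \<longlonglongrightarrow> 1"
proof -
  have "(\<lambda>N. C * norm (a * p ^ N)) \<longlonglongrightarrow> 0"
    using p by (intro tendsto_mult_right_zero tendsto_norm_zero tendsto_mult_right_zero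
        LIMSEQ_power_zero)
  then have "(\<lambda>N. F (a * p ^ N) - 1) \<longlonglongrightarrow> 0"
    by (rule Lim_null_comparison[OF near0])
  then show ?thesis by (simp add: LIM_zero_iff)
qed

lemma norm_power_div_qpoch_le:
  fixes p s :: complex
  assumes "norm p < 1"
  shows "norm (s ^ r / qpoch p p r) \<le> exp (norm p / (1 - norm p)\<^sup>2) * norm s ^ r"
proof -
  have "norm (s ^ r / qpoch p p r) = norm (1 / qpoch p p r) * norm s ^ r"
    by (simp add: norm_divide norm_power)
  also have "\<dots> \<le> exp (norm p / (1 - norm p)\<^sup>2) * norm s ^ r"
    using norm_inverse_qpoch_le[OF order_refl assms, where n=r] by (intro mult_right_mono) auto
  finally show ?thesis .
qed

lemma power_div_qpoch_Suc_diff: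
  fixes p s :: complex
  assumes "norm p < 1"
  shows "s ^ Suc r / qpoch p p (Suc r) - (s * p) ^ Suc r / qpoch p p (Suc r)
    = s * (s ^ r / qpoch p p r)"
proof -
  have nz: "1 - p * p ^ r \<noteq> 0"
    using qpoch_nonzero[of p p "Suc r"] assms by (auto simp: qpoch_Suc)
  have "(s * p) ^ Suc r = s ^ Suc r * (p * p ^ r)"
    by (simp add: power_mult_distrib)
  then have "s ^ Suc r / qpoch p p (Suc r) - (s * p) ^ Suc r / qpoch p p (Suc r)
      = s ^ Suc r * (1 - p * p ^ r) / (qpoch p p r * (1 - p * p ^ r))"
    by (simp add: qpoch_Suc diff_divide_distrib right_diff_distrib)
  with nz show ?thesis by simp
qed

lemma summable_power_div_qpoch:
  fixes p s :: complex
  assumes "norm p < 1" "norm s < 1"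
  shows "summable (\<lambda>r. s ^ r / qpoch p p r)"
  using summable_norm_geometric_bound[OF norm_power_div_qpoch_le[OF assms(1)]] assms
  by (auto intro: summable_norm_cancel)

lemma suminf_power_div_qpoch_step:
  fixes p s :: complex
  assumes p: "norm p < 1" and s: "norm s < 1"
  shows "(\<Sum>r. s ^ r / qpoch p p r) * (1 - s) = (\<Sum>r. (s * p) ^ r / qpoch p p r)"
proof -
  have sp: "norm (s * p) < 1"
    using norm_mult_power_less_one[OF s, of p 1] p by simp
  note summable = summable_power_div_qpoch[OF p]
  have "(\<Sum>r. s ^ r / qpoch p p r) - (\<Sum>r. (s * p) ^ r / qpoch p p r)
      = (\<Sum>r. s ^ r / qpoch p p r - (s * p) ^ r / qpoch p p r)"
    using summable s sp by (intro suminf_diff) auto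
  also have "\<dots> = (\<Sum>r. s ^ Suc r / qpoch p p (Suc r) - (s * p) ^ Suc r / qpoch p p (Suc r))"
    using suminf_split_head[OF summable_diff[OF summable[OF s] summable[OF sp]]] by simp
  also have "\<dots> = (\<Sum>r. s * (s ^ r / qpoch p p r))"
    using p by (simp only: power_div_qpoch_Suc_diff)
  also have "\<dots> = s * (\<Sum>r. s ^ r / qpoch p p r)"
    using summable[OF s] by (rule suminf_mult)
  finally show ?thesis
    by (simp add: algebra_simps)
qed

lemma norm_suminf_power_div_qpoch_minus_one_le:
  fixes p s :: complex
  assumes p: "norm p < 1" and s: "norm s \<le> R" "R < 1"
  shows "norm ((\<Sum>r. s ^ r / qpoch p p r) - 1) \<le> exp (norm p / (1 - norm p)\<^sup>2) / (1 - R) * norm s"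
proof -
  define K where "K = exp (norm p / (1 - norm p)\<^sup>2)"
  have "norm (s ^ Suc r / qpoch p p (Suc r)) \<le> K * norm s * R ^ r" for r
  proof -
    have "norm (s ^ Suc r / qpoch p p (Suc r)) \<le> K * (norm s * norm s ^ r)"
      using norm_power_div_qpoch_le[OF p, of s "Suc r"] by (simp add: K_def)
    also have "\<dots> \<le> K * (norm s * R ^ r)"
      using s by (intro mult_left_mono power_mono) (auto simp: K_def)
    finally show ?thesis
      by (simp add: mult.assoc)
  qed
  moreover have "0 \<le> R"
    using s norm_ge_zero order_trans by blast
  ultimately show ?thesis
    using norm_suminf_minus_head_le[OF summable_power_div_qpoch[OF p], of s "K * norm s" R] s
    by (simp add: K_def)
qed

theorem euler_inverse_qpoch_inf:
  fixes p t :: complex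
  assumes p: "norm p < 1" and t: "norm t < 1"
  shows "(\<lambda>r. t ^ r / qpoch p p r) sums (1 / qpoch_inf t p)"
proof -
  define F where "F s = (\<Sum>r. s ^ r / qpoch p p r)" for s
  have small: "norm (t * p ^ N) \<le> norm t" for N
    using p by (simp add: norm_mult norm_power mult_left_le power_le_one)
  have iterate: "F t * qpoch t p N = F (t * p ^ N)" for N
  proof (induction N)
    case (Suc N)
    have "norm (t * p ^ N) < 1"
      using small[of N] t by linarith
    from suminf_power_div_qpoch_step[OF p this]
    have "F (t * p ^ N) * (1 - t * p ^ N) = F (t * p ^ N * p)"
      by (simp only: F_def)
    with Suc show ?case
      by (simp add: qpoch_Suc mult_ac flip: mult.assoc)
  qed simp
  have "(\<lambda>N. F (t * p ^ N)) \<longlonglongrightarrow> 1"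
  proof (rule LIMSEQ_along_qgeometric[OF p always_eventually, rule_format])
    show "norm (F (t * p ^ N) - 1)
        \<le> exp (norm p / (1 - norm p)\<^sup>2) / (1 - norm t) * norm (t * p ^ N)" for N
      unfolding F_def by (rule norm_suminf_power_div_qpoch_minus_one_le[OF p small t])
  qed
  moreover have "(\<lambda>N. F (t * p ^ N)) \<longlonglongrightarrow> F t * qpoch_inf t p"
    unfolding iterate[symmetric] by (intro tendsto_mult tendsto_const qpoch_LIMSEQ p)
  ultimately have "F t * qpoch_inf t p = 1"
    using LIMSEQ_unique by blast
  then have "F t = 1 / qpoch_inf t p"
    using qpoch_inf_nonzero[OF t p] by (simp add: eq_divide_eq)
  with summable_sums[OF summable_power_div_qpoch[OF p t]] show ?thesis
    by (simp add: F_def)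
qed

lemma euler_term_Suc_diff:
  fixes p s :: complex
  assumes "norm p < 1"
  shows "(-1) ^ Suc r * p ^ (Suc r choose 2) * s ^ Suc r / qpoch p p (Suc r)
      - (-1) ^ Suc r * p ^ (Suc r choose 2) * (s * p) ^ Suc r / qpoch p p (Suc r)
    = - s * ((-1) ^ r * p ^ (r choose 2) * (s * p) ^ r / qpoch p p r)"
proof -
  have "(-1) ^ Suc r * p ^ (Suc r choose 2) * s ^ Suc r / qpoch p p (Suc r)
      - (-1) ^ Suc r * p ^ (Suc r choose 2) * (s * p) ^ Suc r / qpoch p p (Suc r)
    = (-1) ^ Suc r * p ^ (Suc r choose 2)
      * (s ^ Suc r / qpoch p p (Suc r) - (s * p) ^ Suc r / qpoch p p (Suc r))"
    by (simp add: right_diff_distrib)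
  also have "\<dots> = (-1) ^ Suc r * p ^ (Suc r choose 2) * (s * (s ^ r / qpoch p p r))"
    by (simp only: power_div_qpoch_Suc_diff[OF assms])
  also have "\<dots> = - s * ((-1) ^ r * p ^ (r choose 2) * (s * p) ^ r / qpoch p p r)"
    by (simp add: choose_two_Suc power_add power_mult_distrib mult_ac)
  finally show ?thesis .
qed

lemma norm_euler_term_le:
  fixes p s :: complex
  assumes "norm p < 1"
  shows "norm ((-1) ^ r * p ^ (r choose 2) * s ^ r / qpoch p p r)
    \<le> exp (norm p / (1 - norm p)\<^sup>2) * (norm s ^ r * norm p ^ (r choose 2))"
proof -
  have "norm ((-1) ^ r * p ^ (r choose 2) * s ^ r / qpoch p p r)
      = norm p ^ (r choose 2) * norm (s ^ r / qpoch p p r)"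
    by (simp add: norm_mult norm_divide norm_power)
  also have "\<dots> \<le> norm p ^ (r choose 2) * (exp (norm p / (1 - norm p)\<^sup>2) * norm s ^ r)"
    by (intro mult_left_mono norm_power_div_qpoch_le assms) simp
  finally show ?thesis by (simp add: mult_ac)
qed

lemma summable_norm_euler_terms:
  fixes p s :: complex
  assumes p: "norm p < 1"
  shows "summable (\<lambda>r. norm ((-1) ^ r * p ^ (r choose 2) * s ^ r / qpoch p p r))"
  by (rule summable_comparison_test'[OF summable_mult[OF
        summable_power_mult_power_choose_two[of "norm p" "norm s"]]])
    (use p norm_euler_term_le[OF p] in auto)

lemma suminf_euler_terms_step:
  fixes p s :: complex
  assumes p: "norm p < 1"
  shows "(\<Sum>r. (-1) ^ r * p ^ (r choose 2) * s ^ r / qpoch p p r)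
    = (1 - s) * (\<Sum>r. (-1) ^ r * p ^ (r choose 2) * (s * p) ^ r / qpoch p p r)"
proof -
  define g where "g s r = (-1) ^ r * p ^ (r choose 2) * s ^ r / qpoch p p r" for s r
  have summable: "summable (g s)" for s
    unfolding g_def by (rule summable_norm_cancel[OF summable_norm_euler_terms[OF p]])
  have "suminf (g s) - suminf (g (s * p)) = (\<Sum>r. g s r - g (s * p) r)"
    using summable by (intro suminf_diff) auto
  also have "\<dots> = (\<Sum>r. g s (Suc r) - g (s * p) (Suc r))"
    using suminf_split_head[OF summable_diff[OF summable summable]] by (simp add: g_def)
  also have "\<dots> = (\<Sum>r. - s * g (s * p) r)"
    unfolding g_def using p by (simp only: euler_term_Suc_diff)
  also have "\<dots> = - s * suminf (g (s * p))"
    using summable by (rule suminf_mult)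
  finally show ?thesis
    by (simp add: g_def[abs_def] algebra_simps)
qed

lemma norm_suminf_euler_terms_minus_one_le:
  fixes p s :: complex
  assumes p: "norm p < 1" and s: "norm s \<le> 1"
  shows "norm ((\<Sum>r. (-1) ^ r * p ^ (r choose 2) * s ^ r / qpoch p p r) - 1)
    \<le> exp (norm p / (1 - norm p)\<^sup>2) / (1 - norm p) * norm s"
proof -
  define K where "K = exp (norm p / (1 - norm p)\<^sup>2)"
  define g where "g r = (-1) ^ r * p ^ (r choose 2) * s ^ r / qpoch p p r" for r
  have "norm (g (Suc r)) \<le> K * norm s * norm p ^ r" for r
  proof -
    have "norm (g (Suc r)) \<le> K * (norm s ^ Suc r * norm p ^ (Suc r choose 2))"
      unfolding g_def K_def by (rule norm_euler_term_le[OF p])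
    also have "\<dots> \<le> K * (norm s * norm p ^ r)"
      using s p by (intro mult_left_mono mult_mono power_decreasing)
        (auto simp: K_def choose_two_Suc mult_left_le power_le_one)
    finally show ?thesis
      by (simp add: mult.assoc)
  qed
  with norm_suminf_minus_head_le[of g "K * norm s" "norm p"] p show ?thesis
    using summable_norm_cancel[OF summable_norm_euler_terms[OF p, of s]]
    by (simp add: g_def[abs_def] K_def binomial_eq_0)
qed

theorem euler_qpoch_inf:
  fixes a p :: complex
  assumes p: "norm p < 1"
  shows "(\<lambda>r. (-1) ^ r * p ^ (r choose 2) * a ^ r / qpoch p p r) sums qpoch_inf a p"
proof -
  define E where "E s = (\<Sum>r. (-1) ^ r * p ^ (r choose 2) * s ^ r / qpoch p p r)" for s
  have iterate: "E a = qpoch a p N * E (a * p ^ N)" for N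
  proof (induction N)
    case (Suc N)
    have "E (a * p ^ N) = (1 - a * p ^ N) * E (a * p ^ Suc N)"
      using suminf_euler_terms_step[OF p, of "a * p ^ N"] unfolding E_def
      by (simp only: power_Suc2 mult.assoc)
    with Suc show ?case
      by (simp add: qpoch_Suc mult_ac)
  qed simp
  have "(\<lambda>N. a * p ^ N) \<longlonglongrightarrow> 0"
    using p by (intro tendsto_mult_right_zero LIMSEQ_power_zero)
  then have "\<forall>\<^sub>F N in sequentially. norm (a * p ^ N) < 1"
    by (intro order_tendstoD(2)[OF tendsto_norm_zero]) simp_all
  then have "(\<lambda>N. E (a * p ^ N)) \<longlonglongrightarrow> 1"
    by (intro LIMSEQ_along_qgeometric[OF p, where C = "exp (norm p / (1 - norm p)\<^sup>2) / (1 - norm p)"])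
      (elim eventually_mono, unfold E_def, intro norm_suminf_euler_terms_minus_one_le p, simp)
  then have "(\<lambda>N. qpoch a p N * E (a * p ^ N)) \<longlonglongrightarrow> qpoch_inf a p * 1"
    by (intro tendsto_mult qpoch_LIMSEQ p)
  then have "E a = qpoch_inf a p"
    unfolding iterate[symmetric] by (simp add: LIMSEQ_const_iff)
  with summable_sums[OF summable_norm_cancel[OF summable_norm_euler_terms[OF p, of a]]] show ?thesis
    by (simp add: E_def)
qed

lemma has_sum_euler_inverse_qpoch_inf:
  fixes p t :: complex
  assumes "norm p < 1" "norm t < 1"
  shows "((\<lambda>r. t ^ r / qpoch p p r) has_sum (1 / qpoch_inf t p)) UNIV"
  using summable_norm_geometric_bound[OF norm_power_div_qpoch_le[OF assms(1)]] assms
  by (intro norm_summable_imp_has_sum[OF _ euler_inverse_qpoch_inf[OF assms]]) auto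

lemma has_sum_euler_qpoch_inf:
  fixes a p :: complex
  assumes "norm p < 1"
  shows "((\<lambda>r. (-1) ^ r * p ^ (r choose 2) * a ^ r / qpoch p p r) has_sum qpoch_inf a p) UNIV"
  by (rule norm_summable_imp_has_sum[OF summable_norm_euler_terms euler_qpoch_inf]) (use assms in auto)

section \<open>The Jacobi triple product\<close>

lemma has_sum_int_split:
  fixes f :: "int \<Rightarrow> 'a::topological_comm_monoid_add"
  assumes "((\<lambda>n. f (int n)) has_sum a) UNIV" "((\<lambda>n. f (- int (Suc n))) has_sum b) UNIV"
  shows "(f has_sum (a + b)) UNIV"
proof -
  have nonneg: "(f has_sum a) (range int)"
    using assms(1) by (subst has_sum_reindex) (auto simp: o_def)
  have "inj (\<lambda>n::nat. - int (Suc n))"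
    by (auto simp: inj_def)
  then have neg: "(f has_sum b) (range (\<lambda>n. - int (Suc n)))"
    using assms(2) by (subst has_sum_reindex) (auto simp: o_def)
  have "range int \<union> range (\<lambda>n. - int (Suc n)) = UNIV"
  proof -
    have "s \<in> range int \<union> range (\<lambda>n. - int (Suc n))" for s :: int
      by (cases "s \<ge> 0") (auto intro: range_eqI[of _ _ "nat s"] range_eqI[of _ _ "nat (- s - 1)"])
    then show ?thesis by blast
  qed
  moreover have "range int \<inter> range (\<lambda>n. - int (Suc n)) = {}"
    by auto
  ultimately show ?thesis
    using has_sum_Un_disjoint[OF nonneg neg] by simp
qed

lemma summable_on_product_complex:
  fixes f :: "'a \<Rightarrow> complex" and g :: "'b \<Rightarrow> complex"
  assumes f: "f summable_on A" and g: "g summable_on B"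
  shows "(\<lambda>(x, y). f x * g y) summable_on A \<times> B"
proof -
  have "(\<lambda>(x, y). norm (f x) * norm (g y)) summable_on Sigma A (\<lambda>_. B)"
  proof (rule summable_on_SigmaI)
    show "((\<lambda>y. (\<lambda>(x, y). norm (f x) * norm (g y)) (x, y))
        has_sum norm (f x) * (\<Sum>\<^sub>\<infinity>y\<in>B. norm (g y))) B" for x
      using g by (auto simp: summable_on_iff_abs_summable_on_complex
          intro!: has_sum_cmult_right has_sum_infsum)
    show "(\<lambda>x. norm (f x) * (\<Sum>\<^sub>\<infinity>y\<in>B. norm (g y))) summable_on A"
      using f by (intro summable_on_cmult_left) (simp add: summable_on_iff_abs_summable_on_complex)
  qed auto
  then show ?thesis
    by (simp add: summable_on_iff_abs_summable_on_complex case_prod_unfold norm_mult)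
qed

definition theta_coeff :: "complex \<Rightarrow> complex \<Rightarrow> int \<Rightarrow> complex" where
  "theta_coeff p z s = (-1) powi s * p powi (s * (s - 1) div 2) * z powi s"

lemma int_choose_two: "int (n choose 2) = int n * (int n - 1) div 2"
  by (cases n) (auto simp: choose_two zdiv_int algebra_simps)

lemma int_choose_two_add:
  "(m + int r) * (m + int r - 1) div 2 = m * (m - 1) div 2 + int (r choose 2) + m * int r"
proof -
  have "(m + int r) * (m + int r - 1) = m * (m - 1) + int r * (int r - 1) + 2 * (m * int r)"
    by (simp add: algebra_simps)
  moreover have "even (m * (m - 1))" "even (int r * (int r - 1))"
    by auto
  ultimately show ?thesis
    by (auto simp: int_choose_two elim!: evenE)
qed

lemma theta_coeff_nat: "theta_coeff p z (int n) = (-1) ^ n * p ^ (n choose 2) * z ^ n"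
  using int_choose_two_add[of 0 n] by (simp add: theta_coeff_def)

lemma theta_coeff_neg:
  "theta_coeff p z (- int n) = (-1) ^ n * p ^ (n choose 2) * (p / z) ^ n"
proof -
  have "(- int n) * (- int n - 1) = int n * (int n - 1) + 2 * int n"
    by (simp add: algebra_simps)
  then have "(- int n) * (- int n - 1) div 2 = int ((n choose 2) + n)"
    by (simp only: of_nat_add int_choose_two)
  then have "p powi ((- int n) * (- int n - 1) div 2) = p ^ (n choose 2) * p ^ n"
    by (simp only: power_int_of_nat power_add)
  then show ?thesis
    by (cases "even n") (simp_all add: theta_coeff_def power_int_minus power_divide inverse_eq_divide)
qed

lemma theta_coeff_shift:
  assumes "p \<noteq> 0" "z \<noteq> 0"
  shows "theta_coeff p z (m + int r) * ((p / z) ^ r / qpoch p p r)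
    = theta_coeff p z m * ((-1) ^ r * p ^ (r choose 2) * (p powi (m + 1)) ^ r / qpoch p p r)"
proof -
  have "p powi ((m + int r) * (m + int r - 1) div 2)
      = p powi (m * (m - 1) div 2) * p ^ (r choose 2) * (p powi m) ^ r"
    unfolding int_choose_two_add using assms
    by (simp add: power_int_add power_int_mult flip: power_int_of_nat)
  moreover have "(p powi (m + 1)) ^ r = (p powi m) ^ r * p ^ r"
    using assms by (simp add: power_int_add power_mult_distrib)
  ultimately show ?thesis
    using assms by (simp add: theta_coeff_def power_int_add power_divide field_simps)
qed

lemma summable_norm_theta_coeff_nat:
  assumes "norm p < 1"
  shows "summable (\<lambda>n. norm (theta_coeff p z (int n)))"
  using summable_power_mult_power_choose_two[of "norm p" "norm z"] assms
  by (simp add: theta_coeff_nat norm_mult norm_power mult.commute)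

lemma summable_norm_theta_coeff_neg:
  assumes "norm p < 1"
  shows "summable (\<lambda>n. norm (theta_coeff p z (- int n)))"
  using summable_power_mult_power_choose_two[of "norm p" "norm (p / z)"] assms
  by (simp add: theta_coeff_neg norm_mult norm_power mult.commute)

lemma sums_theta_coeff_halves:
  assumes "norm p < 1"
  shows "(\<lambda>n. theta_coeff p z (int n)) sums (\<Sum>n. theta_coeff p z (int n))"
    and "(\<lambda>n. theta_coeff p z (- int (Suc n))) sums (\<Sum>n. theta_coeff p z (- int (Suc n)))"
proof -
  show "(\<lambda>n. theta_coeff p z (int n)) sums (\<Sum>n. theta_coeff p z (int n))"
    using summable_norm_cancel[OF summable_norm_theta_coeff_nat[OF assms]] by (rule summable_sums)
  have "summable (\<lambda>n. theta_coeff p z (- int n))"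
    using summable_norm_cancel[OF summable_norm_theta_coeff_neg[OF assms]] .
  then show "(\<lambda>n. theta_coeff p z (- int (Suc n))) sums (\<Sum>n. theta_coeff p z (- int (Suc n)))"
    by (subst (asm) summable_Suc_iff[symmetric]) (rule summable_sums)
qed

lemma has_sum_theta_coeff_halves:
  assumes "norm p < 1"
  shows "(theta_coeff p z has_sum
    ((\<Sum>n. theta_coeff p z (int n)) + (\<Sum>n. theta_coeff p z (- int (Suc n))))) UNIV"
proof (rule has_sum_int_split)
  show "((\<lambda>n. theta_coeff p z (int n)) has_sum (\<Sum>n. theta_coeff p z (int n))) UNIV"
    by (rule norm_summable_imp_has_sum[OF summable_norm_theta_coeff_nat sums_theta_coeff_halves(1)])
      (use assms in auto)
  have "summable (\<lambda>n. norm (theta_coeff p z (- int (Suc n))))"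
    using summable_norm_theta_coeff_neg[OF assms] by (subst summable_Suc_iff)
  then show "((\<lambda>n. theta_coeff p z (- int (Suc n))) has_sum (\<Sum>n. theta_coeff p z (- int (Suc n)))) UNIV"
    by (rule norm_summable_imp_has_sum[OF _ sums_theta_coeff_halves(2)[OF assms]])
qed

lemma has_sum_theta_coeff_times_qpoch_inf:
  fixes p z :: complex
  assumes p: "norm p < 1" "p \<noteq> 0"
  shows "((\<lambda>m. theta_coeff p z m * qpoch_inf (p powi (m + 1)) p)
    has_sum (qpoch_inf p p * qpoch_inf z p)) UNIV"
proof -
  define f where "f m = theta_coeff p z m * qpoch_inf (p powi (m + 1)) p" for m
  have vanish: "f m = 0" if "m \<notin> range int" for m
  proof -
    have "m < 0"
      using that by (metis nonneg_int_cases not_le rangeI)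
    then have "int (nat (- (m + 1))) = - (m + 1)"
      by simp
    then have "p powi (m + 1) * p ^ nat (- (m + 1)) = p powi (m + 1) * p powi (- (m + 1))"
      by (metis power_int_of_nat)
    also have "\<dots> = 1"
      by (subst power_int_minus) (simp add: p)
    finally have "p powi (m + 1) * p ^ nat (- (m + 1)) = 1" .
    then show ?thesis
      by (simp add: f_def qpoch_inf_eq_0[OF p(1)])
  qed
  have "f (int n) = qpoch_inf p p * ((-1) ^ n * p ^ (n choose 2) * z ^ n / qpoch p p n)" for n
  proof -
    have "qpoch_inf p p = qpoch p p n * qpoch_inf (p powi (int n + 1)) p"
      using qpoch_inf_split[OF p(1), of p n] by (simp add: power_int_add mult.commute)
    then show ?thesis
      using qpoch_nonzero[of p p n] p by (simp add: f_def theta_coeff_nat field_simps)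
  qed
  then have "((f \<circ> int) has_sum (qpoch_inf p p * qpoch_inf z p)) UNIV"
    using has_sum_cmult_right[OF has_sum_euler_qpoch_inf[OF p(1)]] by (simp add: o_def)
  then have "(f has_sum (qpoch_inf p p * qpoch_inf z p)) (range int)"
    by (subst has_sum_reindex) auto
  then show ?thesis
    unfolding f_def[symmetric]
    by (subst has_sum_cong_neutral[where S = UNIV and T = "range int" and g = f]) (auto simp: vanish)
qed

text \<open>
  Multiplying by \<open>1 / (p/z;p)\<^sub>\<infinity> = \<Sum>r. (p/z)^r / (p;p)\<^sub>r\<close> and regrouping along
  \<open>m = s - r\<close> turns the inner sums into Euler's series for \<open>(p^(m+1);p)\<^sub>\<infinity>\<close>, which
  vanishes for \<open>m < 0\<close>.
\<close>

theorem jacobi_triple_product: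
  fixes p z :: complex
  assumes p: "norm p < 1" "p \<noteq> 0" and pz: "norm p < norm z"
  shows "(theta_coeff p z has_sum (qpoch_inf z p * qpoch_inf (p / z) p * qpoch_inf p p)) UNIV"
proof -
  have z: "z \<noteq> 0"
    using pz by auto
  define A where "A = p / z"
  have A: "norm A < 1"
    using pz z by (simp add: A_def norm_divide)
  define w where "w r = A ^ r / qpoch p p r" for r
  have w: "(w has_sum (1 / qpoch_inf A p)) UNIV"
    unfolding w_def by (rule has_sum_euler_inverse_qpoch_inf[OF p(1) A])
  define U where "U = (\<lambda>(s, r). theta_coeff p z s * w r)"
  obtain T where T: "(U has_sum T) (UNIV \<times> UNIV)"
    using summable_on_product_complex[OF has_sum_imp_summable[OF has_sum_theta_coeff_halves[OF p(1)]]
        has_sum_imp_summable[OF w]]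
    unfolding U_def summable_on_def by blast
  have by_s: "((\<lambda>s. theta_coeff p z s * (1 / qpoch_inf A p)) has_sum T) UNIV"
    by (rule has_sum_Sigma'[where B = "\<lambda>_. UNIV", OF T])
      (use has_sum_cmult_right[OF w] in \<open>simp add: U_def\<close>)
  have "((\<lambda>(m, r). U (m + int r, r)) has_sum T) (UNIV \<times> UNIV)"
    using T by (subst has_sum_reindex_bij_witness[where i = "\<lambda>(s, r). (s - int r, r)"
          and j = "\<lambda>(m, r). (m + int r, r)"]) auto
  then have "((\<lambda>m. theta_coeff p z m * qpoch_inf (p powi (m + 1)) p) has_sum T) UNIV"
  proof (rule has_sum_Sigma'[where B = "\<lambda>_. UNIV"], unfold split_conv)
    fix m
    have "U (m + int r, r)
        = theta_coeff p z m * ((-1) ^ r * p ^ (r choose 2) * (p powi (m + 1)) ^ r / qpoch p p r)" for r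
      unfolding U_def w_def A_def split_conv by (rule theta_coeff_shift[OF p(2) z])
    then show "((\<lambda>r. U (m + int r, r)) has_sum theta_coeff p z m * qpoch_inf (p powi (m + 1)) p) UNIV"
      by (simp only: has_sum_cmult_right[OF has_sum_euler_qpoch_inf[OF p(1)]])
  qed
  then have "T = qpoch_inf p p * qpoch_inf z p"
    using has_sum_unique has_sum_theta_coeff_times_qpoch_inf[OF p] by blast
  moreover have "qpoch_inf A p \<noteq> 0"
    by (rule qpoch_inf_nonzero[OF A p(1)])
  ultimately show ?thesis
    using has_sum_cmult_right[OF by_s, of "qpoch_inf A p"] by (simp add: A_def mult_ac)
qed

corollary jacobi_triple_product_sums:
  fixes p z :: complex
  assumes "norm p < 1" "p \<noteq> 0" "norm p < norm z"
  shows "(\<lambda>n. (-1) ^ n * p ^ (n choose 2) * ((p / z) ^ n - p ^ n * z ^ Suc n))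
    sums (qpoch_inf z p * qpoch_inf (p / z) p * qpoch_inf p p)"
proof -
  define SN where "SN = (\<Sum>n. theta_coeff p z (int n))"
  define SP where "SP = (\<Sum>n. theta_coeff p z (- int (Suc n)))"
  have "SN + SP = qpoch_inf z p * qpoch_inf (p / z) p * qpoch_inf p p"
    using has_sum_unique[OF has_sum_theta_coeff_halves[OF assms(1)] jacobi_triple_product[OF assms]]
    by (simp add: SN_def SP_def)
  moreover have "(\<lambda>n. theta_coeff p z (- int n)) sums (SP + 1)"
    using sums_Suc[OF sums_theta_coeff_halves(2)[OF assms(1)]] by (simp add: SP_def theta_coeff_def)
  moreover have "(\<lambda>n. theta_coeff p z (int (Suc n))) sums (SN - 1)"
    using sums_theta_coeff_halves(1)[OF assms(1)]
    by (subst sums_Suc_iff) (simp add: SN_def theta_coeff_def)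
  ultimately have "(\<lambda>n. theta_coeff p z (- int n) + theta_coeff p z (int (Suc n)))
      sums (qpoch_inf z p * qpoch_inf (p / z) p * qpoch_inf p p)"
    using sums_add[of _ "SP + 1" _ "SN - 1"] by (simp add: algebra_simps)
  moreover have "theta_coeff p z (- int n) + theta_coeff p z (int (Suc n))
      = (-1) ^ n * p ^ (n choose 2) * ((p / z) ^ n - p ^ n * z ^ Suc n)" for n
    unfolding theta_coeff_nat theta_coeff_neg by (simp add: choose_two_Suc power_add algebra_simps)
  ultimately show ?thesis
    by simp
qed

section \<open>Selberg's functions\<close>

lemma norm_selberg_type_term_le:
  fixes q y :: complex and a c :: "nat \<Rightarrow> complex"
  assumes q: "norm q < 1" and y: "norm y \<le> 1" and k: "k \<ge> 1"
    and c: "norm (c n) \<le> 2" and a: "norm (a n) \<le> norm q"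
  defines "K \<equiv> exp (norm q / (1 - norm q)\<^sup>2)"
  shows "norm ((-1) ^ n * (y\<^sup>2) ^ n * ((q ^ 5) ^ (n choose 2) * (q ^ n) ^ k) * c n
      / qpoch_inf (a n) q / qpoch q q n) \<le> 2 * K\<^sup>2 * norm y ^ (2 * n) * norm q ^ n"
proof -
  have "norm ((q ^ 5) ^ (n choose 2) * (q ^ n) ^ k) = norm q ^ (5 * (n choose 2) + n * k)"
    by (simp add: norm_mult norm_power power_add power_mult)
  also have "\<dots> \<le> norm q ^ n"
  proof -
    have "n \<le> n * k"
      using k by simp
    then have "n \<le> 5 * (n choose 2) + n * k"
      by linarith
    with q show ?thesis
      by (auto intro!: power_decreasing)
  qed
  finally have Z: "norm ((q ^ 5) ^ (n choose 2) * (q ^ n) ^ k) \<le> norm q ^ n" .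
  have "norm ((-1) ^ n * (y\<^sup>2) ^ n * ((q ^ 5) ^ (n choose 2) * (q ^ n) ^ k) * c n
      / qpoch_inf (a n) q / qpoch q q n)
    = norm y ^ (2 * n) * norm ((q ^ 5) ^ (n choose 2) * (q ^ n) ^ k) * norm (c n)
      * norm (1 / qpoch_inf (a n) q) * norm (1 / qpoch q q n)"
    by (simp add: norm_mult norm_divide norm_power power_mult)
  also have "\<dots> \<le> norm y ^ (2 * n) * norm q ^ n * 2 * K * K"
    using Z c norm_inverse_qpoch_inf_le[OF a q] norm_inverse_qpoch_le[OF order_refl q, where n = n]
    unfolding K_def by (intro mult_mono) auto
  finally show ?thesis
    by (simp add: power2_eq_square mult_ac)
qed

lemma summable_selberg_type:
  fixes q y :: complex and a c :: "nat \<Rightarrow> complex"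
  assumes q: "norm q < 1" and y: "norm y \<le> 1" and k: "k \<ge> 1"
    and c: "\<And>n. norm (c n) \<le> 2" and a: "\<And>n. norm (a n) \<le> norm q"
  shows "summable (\<lambda>n. (-1) ^ n * (y\<^sup>2) ^ n * ((q ^ 5) ^ (n choose 2) * (q ^ n) ^ k) * c n
      / qpoch_inf (a n) q / qpoch q q n)"
proof (rule summable_norm_cancel[OF summable_norm_geometric_bound])
  fix n
  define K where "K = exp (norm q / (1 - norm q)\<^sup>2)"
  have "norm y ^ (2 * n) \<le> 1"
    using y by (intro power_le_one) auto
  then have "2 * K\<^sup>2 * norm y ^ (2 * n) * norm q ^ n \<le> 2 * K\<^sup>2 * 1 * norm q ^ n"
    by (intro mult_right_mono mult_left_mono) auto
  then show "norm ((-1) ^ n * (y\<^sup>2) ^ n * ((q ^ 5) ^ (n choose 2) * (q ^ n) ^ k) * c n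
      / qpoch_inf (a n) q / qpoch q q n) \<le> 2 * K\<^sup>2 * norm q ^ n"
    using norm_selberg_type_term_le[where a = a and c = c and n = n, OF q y k c a]
    unfolding K_def by linarith
qed (use q in auto)

lemma suminf_regroup_shift:
  fixes P Q a b :: "nat \<Rightarrow> 'a::real_normed_vector"
  assumes "summable P" "summable Q" "P 0 = 0"
    and "\<And>n. a n = P n + Q n" "\<And>n. b n = Q n + P (Suc n)"
  shows "suminf a = suminf b"
proof -
  have "suminf a = suminf P + suminf Q"
    unfolding assms(4) using assms(1,2) by (rule suminf_add[symmetric])
  also have "suminf P = (\<Sum>n. P (Suc n))"
    using suminf_split_head[OF assms(1)] assms(3) by simp
  also have "(\<Sum>n. P (Suc n)) + suminf Q = suminf b"
    unfolding assms(5) using assms(1,2)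
    by (subst suminf_add[symmetric]) (auto simp: summable_Suc_iff add.commute)
  finally show ?thesis .
qed

text \<open>
  In the usual notation the terms are
  \<open>(-1)^n y^(2n) q^(n(5n-1)/2) (1 - y q^(2n)) (y;q)\<^sub>n / ((y;q)\<^sub>\<infinity> (q;q)\<^sub>n)\<close> and
  \<open>(-1)^n y^(2n) q^(n(5n-3)/2) (1 - y\<^sup>2 q^(4n)) (y;q)\<^sub>n / ((y;q)\<^sub>\<infinity> (q;q)\<^sub>n)\<close>;
  the series \<open>J x\<close> of the Rogers--Selberg argument is \<open>selberg2 q (x q)\<close>.
\<close>

definition selberg_term1 :: "complex \<Rightarrow> complex \<Rightarrow> nat \<Rightarrow> complex" where
  "selberg_term1 q y n = (-1) ^ n * (y ^ 2) ^ n * ((q ^ 5) ^ (n choose 2) * (q ^ n) ^ 2)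
    * (1 - y * (q ^ n) ^ 2) / qpoch_inf (y * q ^ n) q / qpoch q q n"

definition selberg_term2 :: "complex \<Rightarrow> complex \<Rightarrow> nat \<Rightarrow> complex" where
  "selberg_term2 q y n = (-1) ^ n * (y ^ 2) ^ n * ((q ^ 5) ^ (n choose 2) * q ^ n)
    * (1 - y ^ 2 * (q ^ n) ^ 4) / qpoch_inf (y * q ^ n) q / qpoch q q n"

definition selberg1 :: "complex \<Rightarrow> complex \<Rightarrow> complex" where
  "selberg1 q y = (\<Sum>n. selberg_term1 q y n)"

definition selberg2 :: "complex \<Rightarrow> complex \<Rightarrow> complex" where
  "selberg2 q y = (\<Sum>n. selberg_term2 q y n)"

lemma norm_one_minus_le_two: "norm (x::complex) \<le> 1 \<Longrightarrow> norm (1 - x) \<le> 2"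
  using norm_triangle_ineq4[of 1 x] by simp

lemma selberg_norm_bounds:
  fixes q y :: complex
  assumes "norm y \<le> norm q" "norm q < 1"
  shows "norm y \<le> 1" "norm (y * q ^ n) \<le> norm q"
    "norm (1 - y * (q ^ n) ^ 2) \<le> 2" "norm (1 - y ^ 2 * (q ^ n) ^ 4) \<le> 2"
proof -
  have qn: "norm (q ^ m) \<le> 1" for m
    using assms by (simp add: norm_power power_le_one)
  show y: "norm y \<le> 1"
    using assms by simp
  show "norm (y * q ^ n) \<le> norm q"
    using assms qn[of n] by (simp add: norm_mult mult_le_one order_trans[OF mult_right_le_one_le])
  show "norm (1 - y * (q ^ n) ^ 2) \<le> 2" "norm (1 - y ^ 2 * (q ^ n) ^ 4) \<le> 2"
    using y qn by (auto intro!: norm_one_minus_le_two simp: norm_mult norm_power mult_le_one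
        power_le_one simp flip: power_mult)
qed

lemma summable_selberg_term1:
  "norm q < 1 \<Longrightarrow> norm y \<le> norm q \<Longrightarrow> summable (selberg_term1 q y)"
  unfolding selberg_term1_def[abs_def]
  by (rule summable_selberg_type) (auto simp: selberg_norm_bounds)

lemma summable_selberg_term2:
  "norm q < 1 \<Longrightarrow> norm y \<le> norm q \<Longrightarrow> summable (selberg_term2 q y)"
  using summable_selberg_type[of q y 1 "\<lambda>n. 1 - y ^ 2 * (q ^ n) ^ 4" "\<lambda>n. y * q ^ n"]
  by (simp add: selberg_term2_def[abs_def] selberg_norm_bounds)

lemma selberg_denominators_nonzero:
  fixes q y :: complex
  assumes "norm q < 1" "norm y \<le> norm q"
  shows "qpoch q q n \<noteq> 0" "1 - q * q ^ n \<noteq> 0" "qpoch_inf (y * q ^ n) q \<noteq> 0"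
  using qpoch_nonzero[of q q "Suc n"] qpoch_inf_nonzero[of "y * q ^ n" q]
    selberg_norm_bounds(2)[OF assms(2,1), of n] assms(1)
  by (auto simp: qpoch_Suc)

lemma divide_qpoch_inf_Suc:
  fixes q y :: complex
  assumes "norm q < 1" "norm y \<le> norm q"
  shows "x / qpoch_inf (y * q ^ Suc n) q = x * (1 - y * q ^ n) / qpoch_inf (y * q ^ n) q"
    and "x / qpoch_inf (y * q * q ^ n) q = x * (1 - y * q ^ n) / qpoch_inf (y * q ^ n) q"
proof -
  have "norm (y * q ^ n) < 1"
    using selberg_norm_bounds(2)[OF assms(2,1), of n] assms(1) by linarith
  then have "qpoch_inf (y * q ^ n) q = (1 - y * q ^ n) * qpoch_inf (y * q ^ Suc n) q"
    using qpoch_inf_split[OF assms(1), of "y * q ^ n" 1] by (simp add: qpoch_def mult_ac)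
  moreover have "1 - y * q ^ n \<noteq> 0"
    using \<open>norm (y * q ^ n) < 1\<close> by auto
  ultimately show "x / qpoch_inf (y * q ^ Suc n) q = x * (1 - y * q ^ n) / qpoch_inf (y * q ^ n) q"
    by simp
  then show "x / qpoch_inf (y * q * q ^ n) q = x * (1 - y * q ^ n) / qpoch_inf (y * q ^ n) q"
    by (simp add: mult_ac)
qed

lemma selberg1_eq_selberg2_shift:
  fixes q y :: complex
  assumes q: "norm q < 1" and y: "norm y \<le> norm q"
  shows "selberg1 q y = selberg2 q (y * q)"
proof -
  note small = selberg_norm_bounds[OF y q]
  note nz = selberg_denominators_nonzero[OF q y]
  define P1 where "P1 n = (-1) ^ n * (y ^ 2) ^ n * ((q ^ 5) ^ (n choose 2) * (q ^ n) ^ 2)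
    * (1 - q ^ n) / qpoch_inf (y * q ^ n) q / qpoch q q n" for n
  define P2 where "P2 n = (-1) ^ n * (y ^ 2) ^ n * ((q ^ 5) ^ (n choose 2) * (q ^ n) ^ 3)
    * 1 / qpoch_inf (y * q ^ Suc n) q / qpoch q q n" for n
  have c: "norm (1 - q ^ n) \<le> 2" for n
    using q by (intro norm_one_minus_le_two) (simp add: norm_power power_le_one)
  have sum1: "summable P1"
    unfolding P1_def[abs_def] by (rule summable_selberg_type) (use c small q in auto)
  have "norm (y * q ^ Suc n) \<le> norm q" for n
    by (rule small(2))
  then have sum2: "summable P2"
    unfolding P2_def[abs_def] using small q by (intro summable_selberg_type) auto
  have split1: "selberg_term1 q y n = P1 n + P2 n" for n
    unfolding selberg_term1_def P1_def P2_def divide_qpoch_inf_Suc[OF q y]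
    by (simp add: field_simps nz) algebra
  have split2: "selberg_term2 q (y * q) n = P2 n + P1 (Suc n)" for n
  proof -
    have P1_Suc: "P1 (Suc n) = - ((-1) ^ n * (y ^ 2) ^ Suc n * ((q ^ 5) ^ (n choose 2)
        * (q ^ 5) ^ n * (q ^ Suc n) ^ 2) * (1 - y * q ^ n) / qpoch_inf (y * q ^ n) q / qpoch q q n)"
      unfolding P1_def qpoch_Suc divide_qpoch_inf_Suc[OF q y] using nz[of n]
      by (simp add: choose_two_Suc power_add field_simps)
    show ?thesis
      unfolding selberg_term2_def P2_def P1_Suc divide_qpoch_inf_Suc[OF q y]
      by (simp add: field_simps nz power_mult_distrib power_power_commute[of q 2]
          power_power_commute[of q 5]) algebra
  qed
  show ?thesis
    unfolding selberg1_def selberg2_def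
    by (rule suminf_regroup_shift[OF sum1 sum2 _ split1 split2]) (simp add: P1_def)
qed

lemma selberg2_minus_selberg1:
  fixes q y :: complex
  assumes q: "norm q < 1" and y: "norm y \<le> norm q"
  shows "selberg2 q y - selberg1 q y = y * selberg1 q (y * q)"
proof -
  note small = selberg_norm_bounds[OF y q]
  note nz = selberg_denominators_nonzero[OF q y]
  define P1 where "P1 n = (-1) ^ n * (y ^ 2) ^ n * ((q ^ 5) ^ (n choose 2) * q ^ n)
    * (1 - q ^ n) / qpoch_inf (y * q ^ n) q / qpoch q q n" for n
  define P2 where "P2 n = (-1) ^ n * (y ^ 2) ^ n * ((q ^ 5) ^ (n choose 2) * (q ^ n) ^ 4)
    * y / qpoch_inf (y * q ^ Suc n) q / qpoch q q n" for n
  have c: "norm (1 - q ^ n) \<le> 2" for n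
    using q by (intro norm_one_minus_le_two) (simp add: norm_power power_le_one)
  have sum1: "summable P1"
    using summable_selberg_type[of q y 1 "\<lambda>n. 1 - q ^ n" "\<lambda>n. y * q ^ n"] c small q
    by (simp add: P1_def[abs_def])
  have "norm (y * q ^ Suc n) \<le> norm q" for n
    by (rule small(2))
  then have sum2: "summable P2"
    unfolding P2_def[abs_def] using small q by (intro summable_selberg_type) auto
  have split1: "selberg_term2 q y n - selberg_term1 q y n = P1 n + P2 n" for n
    unfolding selberg_term1_def selberg_term2_def P1_def P2_def divide_qpoch_inf_Suc[OF q y]
    by (simp add: field_simps nz) algebra
  have split2: "y * selberg_term1 q (y * q) n = P2 n + P1 (Suc n)" for n
  proof -
    have P1_Suc: "P1 (Suc n) = - ((-1) ^ n * (y ^ 2) ^ Suc n * ((q ^ 5) ^ (n choose 2) * (q ^ 5) ^ n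
        * q ^ Suc n) * (1 - y * q ^ n) / qpoch_inf (y * q ^ n) q / qpoch q q n)"
      unfolding P1_def qpoch_Suc divide_qpoch_inf_Suc[OF q y] using nz[of n]
      by (simp add: choose_two_Suc power_add field_simps)
    show ?thesis
      unfolding selberg_term1_def P2_def P1_Suc divide_qpoch_inf_Suc[OF q y]
      by (simp add: field_simps nz power_mult_distrib power_power_commute[of q 2]
          power_power_commute[of q 5]) algebra
  qed
  have "selberg2 q y - selberg1 q y = (\<Sum>n. selberg_term2 q y n - selberg_term1 q y n)"
    unfolding selberg1_def selberg2_def using summable_selberg_term1 summable_selberg_term2 q y
    by (intro suminf_diff) auto
  also have "\<dots> = (\<Sum>n. y * selberg_term1 q (y * q) n)"
    by (rule suminf_regroup_shift[OF sum1 sum2 _ split1 split2]) (simp add: P1_def)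
  also have "\<dots> = y * selberg1 q (y * q)"
    unfolding selberg1_def using summable_selberg_term1[OF q, of "y * q"] small(2)[of 1] 
    by (intro suminf_mult) simp
  finally show ?thesis .
qed

section \<open>Uniqueness for the Rogers--Ramanujan functional equation\<close>

lemma functional_equation_telescope:
  fixes D :: "complex \<Rightarrow> complex"
  assumes q: "norm q \<le> 1"
    and fe: "\<And>x. norm x \<le> 1 \<Longrightarrow> D x = D (x * q) + x * q * D (x * q ^ 2)"
    and x: "norm x \<le> 1"
  shows "D x = D (x * q ^ N) + (\<Sum>k<N. x * q ^ Suc k * D (x * q ^ Suc (Suc k)))"
proof (induction N)
  case (Suc N)
  have "norm (x * q ^ N) \<le> 1"
    using q x by (simp add: norm_mult norm_power mult_le_one power_le_one)
  from fe[OF this] have "D (x * q ^ N) = D (x * q ^ Suc N) + x * q ^ Suc N * D (x * q ^ Suc (Suc N))"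
    by (simp add: power2_eq_square mult_ac)
  with Suc show ?case
    by simp
qed simp

lemma norm_telescope_summand_le:
  fixes D :: "complex \<Rightarrow> complex"
  assumes q: "norm q < 1"
    and IH: "\<And>x. norm x \<le> 1 \<Longrightarrow> norm (D x) \<le> B * norm x ^ m" and B: "B \<ge> 0"
    and x: "norm x \<le> 1"
  shows "norm (x * q ^ Suc k * D (x * q ^ Suc (Suc k)))
    \<le> B * norm x ^ Suc m * norm q ^ (2 * m + 1) * norm q ^ k"
proof -
  define r where "r = norm q"
  have r: "0 \<le> r" "r \<le> 1"
    using q by (auto simp: r_def)
  have "norm (x * q ^ Suc (Suc k)) \<le> 1"
    using x q by (simp add: norm_mult norm_power mult_le_one power_le_one)
  from IH[OF this] have "norm (D (x * q ^ Suc (Suc k))) \<le> B * (norm x * r ^ Suc (Suc k)) ^ m"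
    unfolding r_def norm_mult norm_power .
  then have "norm (x * q ^ Suc k * D (x * q ^ Suc (Suc k)))
      \<le> norm x * r ^ Suc k * (B * (norm x * r ^ Suc (Suc k)) ^ m)"
    unfolding norm_mult norm_power r_def by (rule mult_left_mono) simp
  also have "\<dots> = B * norm x ^ Suc m * r ^ (Suc k + Suc (Suc k) * m)"
    by (simp add: power_mult_distrib power_add power_mult mult_ac)
  also have "Suc k + Suc (Suc k) * m = (2 * m + 1) + k + k * m"
    by (simp add: algebra_simps)
  also have "B * norm x ^ Suc m * r ^ ((2 * m + 1) + k + k * m)
      = B * norm x ^ Suc m * r ^ (2 * m + 1) * r ^ k * r ^ (k * m)"
    by (simp only: power_add mult.assoc)
  also have "\<dots> \<le> B * norm x ^ Suc m * r ^ (2 * m + 1) * r ^ k"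
    using B r by (intro mult_right_le_one_le mult_nonneg_nonneg power_le_one) auto
  finally show ?thesis
    by (simp add: r_def)
qed

lemma functional_equation_bound_step:
  fixes D :: "complex \<Rightarrow> complex"
  assumes q: "norm q < 1"
    and fe: "\<And>x. norm x \<le> 1 \<Longrightarrow> D x = D (x * q) + x * q * D (x * q ^ 2)"
    and bound: "\<And>x. norm x \<le> 1 \<Longrightarrow> norm (D x) \<le> K * norm x" and K: "K \<ge> 0"
    and IH: "\<And>x. norm x \<le> 1 \<Longrightarrow> norm (D x) \<le> B * norm x ^ m" and B: "B \<ge> 0"
    and x: "norm x \<le> 1"
  shows "norm (D x) \<le> B * (norm q ^ (2 * m + 1) / (1 - norm q)) * norm x ^ Suc m"
proof -
  define r where "r = norm q"
  have r: "0 \<le> r" "r < 1"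
    using q by (auto simp: r_def)
  define M where "M = B * norm x ^ Suc m * r ^ (2 * m + 1)"
  have M: "M \<ge> 0"
    using B r by (simp add: M_def)
  have "norm (D x) \<le> K * r ^ N + M / (1 - r)" for N
  proof -
    have "norm (D x) \<le> norm (D (x * q ^ N)) + norm (\<Sum>k<N. x * q ^ Suc k * D (x * q ^ Suc (Suc k)))"
      using functional_equation_telescope[OF less_imp_le[OF q] fe x, of N] norm_triangle_ineq
      by metis
    moreover have "norm (D (x * q ^ N)) \<le> K * r ^ N"
    proof -
      have "norm (x * q ^ N) \<le> r ^ N" "r ^ N \<le> 1"
        using x r by (simp_all add: norm_mult norm_power r_def mult_left_le_one_le power_le_one)
      with bound[of "x * q ^ N"] K show ?thesis
        by (meson mult_left_mono order_trans)
    qed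
    moreover have "norm (\<Sum>k<N. x * q ^ Suc k * D (x * q ^ Suc (Suc k))) \<le> (\<Sum>k<N. M * r ^ k)"
      using norm_telescope_summand_le[OF q IH B x]
      by (intro order_trans[OF norm_sum sum_mono]) (simp add: M_def r_def)
    moreover have "(\<Sum>k<N. M * r ^ k) \<le> M / (1 - r)"
      by (rule sum_lessThan_geometric_le[OF M r])
    ultimately show ?thesis
      by linarith
  qed
  moreover have "(\<lambda>N. K * r ^ N + M / (1 - r)) \<longlonglongrightarrow> M / (1 - r)"
    using tendsto_add[OF tendsto_mult_right_zero[OF LIMSEQ_power_zero[of r]] tendsto_const, of K]
      r by simp
  ultimately have "norm (D x) \<le> M / (1 - r)"
    by (intro LIMSEQ_le_const) auto
  then show ?thesis
    by (simp add: M_def r_def field_simps)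
qed

lemma LIMSEQ_prod_lessThan_zero:
  fixes a :: "nat \<Rightarrow> real"
  assumes "a \<longlonglongrightarrow> 0"
  shows "(\<lambda>m. \<Prod>j<m. a j) \<longlonglongrightarrow> 0"
proof -
  have "\<forall>\<^sub>F m in sequentially. norm (a m) < 1/2"
    using assms by (intro order_tendstoD(2)[OF tendsto_norm_zero]) simp_all
  then obtain N where N: "\<And>m. m \<ge> N \<Longrightarrow> norm (a m) < 1/2"
    by (auto simp: eventually_sequentially)
  have "summable (\<lambda>m. \<Prod>j<m. a j)"
  proof (rule summable_ratio_test[of "1/2" N])
    fix m
    assume "m \<ge> N"
    then have "norm (\<Prod>j<m. a j) * norm (a m) \<le> norm (\<Prod>j<m. a j) * (1/2)"
      using N[of m] by (intro mult_left_mono) auto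
    then show "norm (\<Prod>j<Suc m. a j) \<le> 1/2 * norm (\<Prod>j<m. a j)"
      by (simp add: abs_mult mult.commute)
  qed simp
  then show ?thesis
    by (rule summable_LIMSEQ_zero)
qed

theorem functional_equation_unique:
  fixes D :: "complex \<Rightarrow> complex"
  assumes q: "norm q < 1"
    and fe: "\<And>x. norm x \<le> 1 \<Longrightarrow> D x = D (x * q) + x * q * D (x * q ^ 2)"
    and bound: "\<And>x. norm x \<le> 1 \<Longrightarrow> norm (D x) \<le> C * norm x"
    and x: "norm x \<le> 1"
  shows "D x = 0"
proof -
  define K where "K = max C 0"
  have K: "K \<ge> 0"
    by (simp add: K_def)
  have boundK: "norm (D y) \<le> K * norm y" if "norm y \<le> 1" for y
    using bound[OF that] mult_right_mono[of C K "norm y"] by (simp add: K_def)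
  define r where "r = norm q"
  have r: "0 \<le> r" "r < 1"
    using q by (auto simp: r_def)
  define B where "B m = K * (\<Prod>j<m. r ^ (2 * j + 1) / (1 - r))" for m
  have B_nonneg: "B m \<ge> 0" for m
    using K r by (auto simp: B_def intro!: mult_nonneg_nonneg prod_nonneg)
  have B_Suc: "B (Suc m) = B m * (r ^ (2 * m + 1) / (1 - r))" for m
    by (simp add: B_def)
  have bounds: "norm (D y) \<le> B m * norm y ^ m" if "norm y \<le> 1" for m y
    using that
  proof (induction m arbitrary: y)
    case 0
    then show ?case
      using boundK[OF 0] K by (simp add: B_def mult_left_le order_trans)
  next
    case (Suc m)
    from functional_equation_bound_step[OF q fe boundK K Suc.IH B_nonneg Suc.prems]
    show ?case
      by (simp add: B_Suc r_def mult_ac)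
  qed
  have "(\<lambda>m. r ^ (2 * m + 1) / (1 - r)) \<longlonglongrightarrow> 0"
    using r by (intro tendsto_divide_zero LIMSEQ_subseq_LIMSEQ[OF LIMSEQ_power_zero, unfolded o_def])
      (auto simp: strict_mono_def)
  then have "B \<longlonglongrightarrow> 0"
    unfolding B_def[abs_def] by (intro tendsto_mult_right_zero LIMSEQ_prod_lessThan_zero)
  moreover have "norm (D x) \<le> B m" for m
    using bounds[OF x, of m] B_nonneg[of m] x
    by (meson mult_left_le norm_ge_zero order_trans power_le_one)
  ultimately have "norm (D x) \<le> 0"
    by (intro LIMSEQ_le_const) auto
  then show ?thesis
    by simp
qed

section \<open>The Rogers--Ramanujan identities\<close>

definition rr_series :: "complex \<Rightarrow> complex \<Rightarrow> complex" where
  "rr_series q x = (\<Sum>n. x ^ n * q ^ n\<^sup>2 / qpoch q q n)"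

lemma norm_rr_term_le:
  fixes q x :: complex
  assumes q: "norm q < 1" and x: "norm x \<le> 1"
  shows "norm (x ^ Suc n * q ^ (Suc n)\<^sup>2 / qpoch q q (Suc n))
    \<le> exp (norm q / (1 - norm q)\<^sup>2) * norm x * norm q ^ n"
proof -
  have "norm (x ^ Suc n * q ^ (Suc n)\<^sup>2 / qpoch q q (Suc n))
      = norm x ^ Suc n * norm q ^ (Suc n)\<^sup>2 * norm (1 / qpoch q q (Suc n))"
    by (simp add: norm_mult norm_divide norm_power)
  also have "\<dots> \<le> norm x * norm q ^ n * exp (norm q / (1 - norm q)\<^sup>2)"
  proof (intro mult_mono)
    show "norm x ^ Suc n \<le> norm x"
      using x by (simp add: mult_left_le power_le_one)
    show "norm q ^ (Suc n)\<^sup>2 \<le> norm q ^ n"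
      using q by (intro power_decreasing) (auto simp: power2_eq_square)
  qed (use norm_inverse_qpoch_le[OF order_refl q] in auto)
  finally show ?thesis
    by (simp add: mult_ac)
qed

lemma summable_rr_terms:
  fixes q x :: complex
  assumes "norm q < 1" "norm x \<le> 1"
  shows "summable (\<lambda>n. x ^ n * q ^ n\<^sup>2 / qpoch q q n)"
  using summable_norm_geometric_bound[OF norm_rr_term_le[OF assms]] assms
  by (subst summable_Suc_iff[symmetric]) (auto intro: summable_norm_cancel)

lemma rr_series_functional_equation:
  fixes q x :: complex
  assumes q: "norm q < 1" and x: "norm x \<le> 1"
  shows "rr_series q x = rr_series q (x * q) + x * q * rr_series q (x * q ^ 2)"
proof -
  have xq: "norm (x * q) \<le> 1" "norm (x * q ^ 2) \<le> 1"
    using x q by (simp_all add: norm_mult norm_power mult_le_one power_le_one)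
  note summable = summable_rr_terms[OF q]
  have shifted: "x ^ Suc m * q ^ (Suc m)\<^sup>2 / qpoch q q (Suc m)
      - (x * q) ^ Suc m * q ^ (Suc m)\<^sup>2 / qpoch q q (Suc m)
    = x * q * ((x * q ^ 2) ^ m * q ^ m\<^sup>2 / qpoch q q m)" for m
  proof -
    have "x ^ Suc m * q ^ (Suc m)\<^sup>2 / qpoch q q (Suc m)
        - (x * q) ^ Suc m * q ^ (Suc m)\<^sup>2 / qpoch q q (Suc m)
      = q ^ (Suc m)\<^sup>2 * (x ^ Suc m / qpoch q q (Suc m) - (x * q) ^ Suc m / qpoch q q (Suc m))"
      by (simp add: field_simps)
    also have "\<dots> = q ^ (Suc m)\<^sup>2 * (x * (x ^ m / qpoch q q m))"
      by (simp only: power_div_qpoch_Suc_diff[OF q])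
    also have "\<dots> = x * q * ((x * q ^ 2) ^ m * q ^ m\<^sup>2 / qpoch q q m)"
      by (simp add: power2_eq_square power_add power_mult_distrib mult_ac)
    finally show ?thesis .
  qed
  have "rr_series q x - rr_series q (x * q)
      = (\<Sum>n. x ^ n * q ^ n\<^sup>2 / qpoch q q n - (x * q) ^ n * q ^ n\<^sup>2 / qpoch q q n)"
    unfolding rr_series_def using summable x xq by (intro suminf_diff) auto
  also have "\<dots> = (\<Sum>m. x ^ Suc m * q ^ (Suc m)\<^sup>2 / qpoch q q (Suc m)
      - (x * q) ^ Suc m * q ^ (Suc m)\<^sup>2 / qpoch q q (Suc m))"
    using suminf_split_head[OF summable_diff[OF summable[OF x] summable[OF xq(1)]]] by simp
  also have "\<dots> = (\<Sum>m. x * q * ((x * q ^ 2) ^ m * q ^ m\<^sup>2 / qpoch q q m))"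
    by (simp only: shifted)
  also have "\<dots> = x * q * rr_series q (x * q ^ 2)"
    unfolding rr_series_def using summable[OF xq(2)] by (rule suminf_mult)
  finally show ?thesis
    by (simp add: algebra_simps)
qed

lemma norm_rr_series_minus_one_le:
  fixes q x :: complex
  assumes q: "norm q < 1" and x: "norm x \<le> 1"
  shows "norm (rr_series q x - 1) \<le> exp (norm q / (1 - norm q)\<^sup>2) / (1 - norm q) * norm x"
  using norm_suminf_minus_head_le[OF summable_rr_terms[OF assms] norm_rr_term_le[OF assms]] q
  by (simp add: rr_series_def)

lemma selberg2_functional_equation:
  fixes q x :: complex
  assumes q: "norm q < 1" and x: "norm x \<le> 1"
  shows "selberg2 q (x * q) = selberg2 q (x * q * q) + x * q * selberg2 q (x * q ^ 2 * q)"
proof -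
  have y: "norm (x * q) \<le> norm q" and yq: "norm (x * q * q) \<le> norm q"
    using x q by (auto simp: norm_mult mult_left_le_one_le mult_le_one)
  show ?thesis
    using selberg2_minus_selberg1[OF q y] selberg1_eq_selberg2_shift[OF q y]
      selberg1_eq_selberg2_shift[OF q yq]
    by (simp add: power2_eq_square algebra_simps)
qed

lemma norm_suminf_selberg_term2_tail_le:
  fixes q y :: complex
  assumes q: "norm q < 1" and y: "norm y \<le> norm q"
  defines "K \<equiv> exp (norm q / (1 - norm q)\<^sup>2)"
  shows "norm (\<Sum>n. selberg_term2 q y (Suc n)) \<le> 2 * K\<^sup>2 / (1 - norm q) * norm y"
proof -
  note small = selberg_norm_bounds[OF y q]
  have K: "K \<ge> 0"
    by (simp add: K_def)
  have "norm (selberg_term2 q y (Suc n)) \<le> 2 * K\<^sup>2 * norm y * norm q ^ n" for n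
  proof -
    have "norm (selberg_term2 q y (Suc n)) \<le> 2 * K\<^sup>2 * norm y ^ (2 * Suc n) * norm q ^ Suc n"
      using norm_selberg_type_term_le[of q y 1 "\<lambda>n. 1 - y ^ 2 * (q ^ n) ^ 4" "Suc n"
          "\<lambda>n. y * q ^ n"] small(1) small(2)[of "Suc n"] small(4)[of "Suc n"] q
      by (simp add: selberg_term2_def K_def)
    also have "\<dots> \<le> 2 * K\<^sup>2 * norm y * norm q ^ n"
    proof (intro mult_mono mult_left_mono)
      show "norm y ^ (2 * Suc n) \<le> norm y"
        using power_decreasing[of 1 "2 * Suc n" "norm y"] small(1) by simp
      show "norm q ^ Suc n \<le> norm q ^ n"
        using q by (intro power_decreasing) auto
    qed (use K in auto)
    finally show ?thesis .
  qed
  then show ?thesis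
    using norm_suminf_le_geometric[of "\<lambda>n. selberg_term2 q y (Suc n)" "2 * K\<^sup>2 * norm y" "norm q"] q
    by (simp add: field_simps)
qed

lemma norm_selberg2_minus_one_le:
  fixes q y :: complex
  assumes q: "norm q < 1" and y: "norm y \<le> norm q"
  defines "K \<equiv> exp (norm q / (1 - norm q)\<^sup>2)"
  shows "norm (selberg2 q y - 1) \<le> (K / (1 - norm q) + K + 2 * K\<^sup>2 / (1 - norm q)) * norm y"
proof -
  have y1: "norm y < 1"
    using y q by linarith
  have bA: "norm (1 / qpoch_inf y q - 1) \<le> K / (1 - norm q) * norm y"
    using norm_suminf_power_div_qpoch_minus_one_le[OF q y q]
      sums_unique[OF euler_inverse_qpoch_inf[OF q y1]]
    by (simp add: K_def)
  have bB: "norm (y ^ 2 / qpoch_inf y q) \<le> K * norm y"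
  proof -
    have "norm (y ^ 2) \<le> norm y"
      using y1 by (simp add: power2_eq_square norm_mult mult_left_le_one_le)
    moreover have "norm (1 / qpoch_inf y q) \<le> K"
      using norm_inverse_qpoch_inf_le[OF y q] by (simp add: K_def)
    ultimately have "norm (1 / qpoch_inf y q) * norm (y ^ 2) \<le> K * norm y"
      by (intro mult_mono) (auto simp: K_def)
    then show ?thesis
      by (simp add: norm_divide)
  qed
  note bS = norm_suminf_selberg_term2_tail_le[OF q y, folded K_def]
  have eq: "selberg2 q y - 1
      = (1 / qpoch_inf y q - 1) - y ^ 2 / qpoch_inf y q + (\<Sum>n. selberg_term2 q y (Suc n))"
  proof -
    have "selberg_term2 q y 0 = (1 - y ^ 2) / qpoch_inf y q"
      by (simp add: selberg_term2_def binomial_eq_0)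
    then show ?thesis
      using suminf_split_head[OF summable_selberg_term2[OF q y]]
      by (simp add: selberg2_def diff_divide_distrib)
  qed
  show ?thesis
    unfolding eq
    using norm_triangle_ineq[of "1 / qpoch_inf y q - 1 - y ^ 2 / qpoch_inf y q"
        "\<Sum>n. selberg_term2 q y (Suc n)"]
      norm_triangle_ineq4[of "1 / qpoch_inf y q - 1" "y ^ 2 / qpoch_inf y q"] bA bB bS
    by (simp only: distrib_right)
qed

theorem rr_series_eq_selberg2:
  fixes q x :: complex
  assumes q: "norm q < 1" and x: "norm x \<le> 1"
  shows "rr_series q x = selberg2 q (x * q)"
proof -
  define K where "K = exp (norm q / (1 - norm q)\<^sup>2)"
  define C1 where "C1 = K / (1 - norm q) + K + 2 * K\<^sup>2 / (1 - norm q)"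
  define C2 where "C2 = K / (1 - norm q)"
  define D where "D z = selberg2 q (z * q) - rr_series q z" for z
  have "D x = 0"
  proof (rule functional_equation_unique[OF q _ _ x])
    fix z :: complex
    assume z: "norm z \<le> 1"
    show "D z = D (z * q) + z * q * D (z * q ^ 2)"
      using selberg2_functional_equation[OF q z] rr_series_functional_equation[OF q z]
      by (simp add: D_def algebra_simps)
    have zq: "norm (z * q) \<le> norm q" "norm (z * q) \<le> norm z"
      using z q by (auto simp: norm_mult mult_left_le_one_le mult_left_le)
    have C1: "C1 \<ge> 0"
      using q by (simp add: C1_def K_def)
    have "norm (D z) \<le> norm (selberg2 q (z * q) - 1) + norm (rr_series q z - 1)"
      unfolding D_def using norm_triangle_ineq4[of "selberg2 q (z * q) - 1" "rr_series q z - 1"]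
      by simp
    also have "\<dots> \<le> C1 * norm (z * q) + C2 * norm z"
      using norm_selberg2_minus_one_le[OF q zq(1)] norm_rr_series_minus_one_le[OF q z]
      by (simp add: C1_def C2_def K_def)
    also have "\<dots> \<le> (C1 + C2) * norm z"
      using mult_left_mono[OF zq(2) C1] by (simp add: distrib_right)
    finally show "norm (D z) \<le> (C1 + C2) * norm z" .
  qed
  then show ?thesis
    by (simp add: D_def)
qed

lemma qpoch_mult_dissection:
  "qpoch a q (m * N) = (\<Prod>j<m. qpoch (a * q ^ j) (q ^ m) N)"
proof (induction N)
  case (Suc N)
  have "qpoch a q (m * Suc N) = qpoch a q (m * N) * qpoch (a * q ^ (m * N)) q m"
    using qpoch_add[of a q "m * N" m] by (simp add: add.commute)
  also have "qpoch (a * q ^ (m * N)) q m = (\<Prod>j<m. 1 - a * q ^ j * (q ^ m) ^ N)"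
    by (simp add: qpoch_def power_add mult_ac flip: power_mult)
  finally show ?case
    using Suc by (simp add: qpoch_Suc prod.distrib)
qed simp

lemma qpoch_inf_dissection:
  fixes q :: complex
  assumes q: "norm q < 1" and m: "m > 0"
  shows "qpoch_inf a q = (\<Prod>j<m. qpoch_inf (a * q ^ j) (q ^ m))"
proof -
  have "strict_mono (\<lambda>N. m * N)"
    using m by (auto simp: strict_mono_def)
  then have "(\<lambda>N. qpoch a q (m * N)) \<longlonglongrightarrow> qpoch_inf a q"
    using LIMSEQ_subseq_LIMSEQ[OF qpoch_LIMSEQ[OF q]] by (simp add: o_def)
  moreover have "norm (q ^ m) < 1"
    using q m by (simp add: norm_power power_less_one_iff)
  then have "(\<lambda>N. qpoch a q (m * N)) \<longlonglongrightarrow> (\<Prod>j<m. qpoch_inf (a * q ^ j) (q ^ m))"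
    unfolding qpoch_mult_dissection by (intro tendsto_prod qpoch_LIMSEQ)
  ultimately show ?thesis
    by (rule LIMSEQ_unique)
qed

lemma qpoch_inf_dissection5:
  fixes q :: complex
  assumes "norm q < 1"
  shows "qpoch_inf q q = qpoch_inf q (q ^ 5) * qpoch_inf (q ^ 2) (q ^ 5) * qpoch_inf (q ^ 3) (q ^ 5)
    * qpoch_inf (q ^ 4) (q ^ 5) * qpoch_inf (q ^ 5) (q ^ 5)"
  using qpoch_inf_dissection[OF assms, of 5 q]
  by (simp add: numeral_eq_Suc lessThan_Suc power_Suc mult_ac)

lemma selberg_term2_at_q:
  fixes q :: complex
  assumes q: "norm q < 1"
  shows "selberg_term2 q q n
    = (-1) ^ n * (q ^ 5) ^ (n choose 2) * ((q ^ 3) ^ n - (q ^ 5) ^ n * (q ^ 2) ^ Suc n) / qpoch_inf q q"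
proof -
  have "(-1) ^ n * (q ^ 2) ^ n * ((q ^ 5) ^ (n choose 2) * q ^ n) * (1 - q ^ 2 * (q ^ n) ^ 4)
      = (-1) ^ n * (q ^ 5) ^ (n choose 2) * ((q ^ 3) ^ n - (q ^ 5) ^ n * (q ^ 2) ^ Suc n)"
    unfolding power_power_commute[of q _ n] power_Suc by algebra
  then show ?thesis
    unfolding selberg_term2_def divide_divide_eq_left qpoch_inf_split[OF q, of q n]
    by (simp add: mult.commute)
qed

lemma selberg_term1_at_q:
  fixes q :: complex
  assumes q: "norm q < 1"
  shows "selberg_term1 q q n
    = (-1) ^ n * (q ^ 5) ^ (n choose 2) * ((q ^ 4) ^ n - (q ^ 5) ^ n * q ^ Suc n) / qpoch_inf q q"
proof -
  have "(-1) ^ n * (q ^ 2) ^ n * ((q ^ 5) ^ (n choose 2) * (q ^ n) ^ 2) * (1 - q * (q ^ n) ^ 2)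
      = (-1) ^ n * (q ^ 5) ^ (n choose 2) * ((q ^ 4) ^ n - (q ^ 5) ^ n * q ^ Suc n)"
    unfolding power_power_commute[of q _ n] power_Suc by algebra
  then show ?thesis
    unfolding selberg_term1_def divide_divide_eq_left qpoch_inf_split[OF q, of q n]
    by (simp add: mult.commute)
qed

lemma qpoch_inf_0_0 [simp]: "qpoch_inf 0 0 = 1"
  by (simp add: qpoch_inf_def)

theorem rogers_ramanujan_1:
  fixes q :: complex
  assumes q: "norm q < 1"
  shows "(\<lambda>n. q ^ n\<^sup>2 / qpoch q q n) sums (1 / (qpoch_inf q (q ^ 5) * qpoch_inf (q ^ 4) (q ^ 5)))"
proof (cases "q = 0")
  case True
  have "(\<lambda>n. (0::complex) ^ n\<^sup>2) = (\<lambda>n. if n = 0 then 1 else 0)"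
    by (auto simp: power_0_left)
  with True show ?thesis
    using sums_single[of 0 "\<lambda>_. 1 :: complex"] by (simp add: qpoch_def)
next
  case False
  have q5: "norm (q ^ 5) < 1" "norm (q ^ 5) < norm (q ^ 2)" "q ^ 5 \<noteq> 0" "q ^ 5 / q ^ 2 = q ^ 3"
    using q False by (auto simp: norm_power power_strict_decreasing power_less_one_iff field_simps
        simp flip: power_add)
  have nz: "qpoch_inf (q ^ k) (q ^ 5) \<noteq> 0" if "k > 0" for k
    using q that q5 by (intro qpoch_inf_nonzero) (auto simp: norm_power power_less_one_iff)
  have "(\<lambda>n. selberg_term2 q q n) sums (qpoch_inf (q ^ 2) (q ^ 5) * qpoch_inf (q ^ 3) (q ^ 5)
      * qpoch_inf (q ^ 5) (q ^ 5) / qpoch_inf q q)"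
    using sums_divide[OF jacobi_triple_product_sums[OF q5(1,3,2)], of "qpoch_inf q q"]
    by (simp add: selberg_term2_at_q[OF q] q5(4))
  also have "\<dots> = 1 / (qpoch_inf q (q ^ 5) * qpoch_inf (q ^ 4) (q ^ 5))"
    using nz[of 2] nz[of 3] nz[of 5] by (simp add: qpoch_inf_dissection5[OF q])
  finally have "selberg2 q q = 1 / (qpoch_inf q (q ^ 5) * qpoch_inf (q ^ 4) (q ^ 5))"
    unfolding selberg2_def by (rule sums_unique[symmetric])
  then have "rr_series q 1 = 1 / (qpoch_inf q (q ^ 5) * qpoch_inf (q ^ 4) (q ^ 5))"
    using rr_series_eq_selberg2[OF q, of 1] by simp
  then show ?thesis
    using summable_sums[OF summable_rr_terms[OF q, of 1]] by (simp add: rr_series_def)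
qed

theorem rogers_ramanujan_2:
  fixes q :: complex
  assumes q: "norm q < 1"
  shows "(\<lambda>n. q ^ (n\<^sup>2 + n) / qpoch q q n)
    sums (1 / (qpoch_inf (q ^ 2) (q ^ 5) * qpoch_inf (q ^ 3) (q ^ 5)))"
proof (cases "q = 0")
  case True
  have "(\<lambda>n. (0::complex) ^ (n\<^sup>2 + n)) = (\<lambda>n. if n = 0 then 1 else 0)"
    by (auto simp: power_0_left)
  with True show ?thesis
    using sums_single[of 0 "\<lambda>_. 1 :: complex"] by (simp add: qpoch_def)
next
  case False
  have q5: "norm (q ^ 5) < 1" "norm (q ^ 5) < norm q" "q ^ 5 \<noteq> 0" "q ^ 5 / q = q ^ 4"
    using q False power_strict_decreasing[of 1 5 "norm q"]
    by (auto simp: norm_power power_less_one_iff field_simps simp flip: power_Suc)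
  have nz: "qpoch_inf (q ^ k) (q ^ 5) \<noteq> 0" if "k > 0" for k
    using q that q5 by (intro qpoch_inf_nonzero) (auto simp: norm_power power_less_one_iff)
  have "(\<lambda>n. selberg_term1 q q n) sums (qpoch_inf q (q ^ 5) * qpoch_inf (q ^ 4) (q ^ 5)
      * qpoch_inf (q ^ 5) (q ^ 5) / qpoch_inf q q)"
    using sums_divide[OF jacobi_triple_product_sums[OF q5(1,3,2)], of "qpoch_inf q q"]
    by (simp add: selberg_term1_at_q[OF q] q5(4))
  also have "\<dots> = 1 / (qpoch_inf (q ^ 2) (q ^ 5) * qpoch_inf (q ^ 3) (q ^ 5))"
    using nz[of 1] nz[of 4] nz[of 5] by (simp add: qpoch_inf_dissection5[OF q])
  finally have "selberg1 q q = 1 / (qpoch_inf (q ^ 2) (q ^ 5) * qpoch_inf (q ^ 3) (q ^ 5))"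
    unfolding selberg1_def by (rule sums_unique[symmetric])
  then have "rr_series q q = 1 / (qpoch_inf (q ^ 2) (q ^ 5) * qpoch_inf (q ^ 3) (q ^ 5))"
    using rr_series_eq_selberg2[OF q, of q] selberg1_eq_selberg2_shift[OF q order_refl] q by simp
  then show ?thesis
    using summable_sums[OF summable_rr_terms[OF q, of q]] q
    by (simp add: rr_series_def power_add power2_eq_square mult_ac)
qed

section \<open>The double series\<close>

lemma fps_coeff_from_dilation:
  fixes C :: "complex fps"
  assumes "(1 - fps_X) * C = C oo (fps_const q * fps_X)" "fps_nth C 0 = 1"
  shows "fps_nth C n * qpoch q q n = 1"
proof (induction n)
  case (Suc n)
  have "fps_nth ((1 - fps_X) * C) (Suc n) = fps_nth (C oo (fps_const q * fps_X)) (Suc n)"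
    using assms(1) by simp
  then have "fps_nth C (Suc n) - fps_nth C n = q ^ Suc n * fps_nth C (Suc n)"
    unfolding fps_compose_linear by (simp add: algebra_simps)
  then have "fps_nth C (Suc n) * (1 - q * q ^ n) = fps_nth C n"
    by (simp add: algebra_simps)
  with Suc show ?case
    by (simp add: qpoch_Suc mult_ac)
qed (simp add: assms(2))

lemma fps_euler_dilation:
  fixes q :: complex
  assumes "norm q < 1"
  defines "A \<equiv> Abs_fps (\<lambda>i. q ^ (i choose 2) / qpoch q q i)"
  shows "A = (1 + fps_X) * (A oo (fps_const q * fps_X))"
proof (rule fps_ext)
  fix n
  show "fps_nth A n = fps_nth ((1 + fps_X) * (A oo (fps_const q * fps_X))) n"
  proof (cases n)
    case (Suc m)
    have "1 - q * q ^ m \<noteq> 0" "qpoch q q m \<noteq> 0"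
      using qpoch_nonzero[of q q "Suc m"] assms(1) by (auto simp: qpoch_Suc)
    then have "q ^ (Suc m choose 2) / qpoch q q (Suc m)
        = q ^ Suc m * (q ^ (Suc m choose 2) / qpoch q q (Suc m))
          + q ^ m * (q ^ (m choose 2) / qpoch q q m)"
      by (simp add: qpoch_Suc choose_two_Suc field_simps power_add)
    with Suc show ?thesis
      unfolding fps_compose_linear by (simp add: A_def distrib_right)
  qed (simp add: A_def distrib_right fps_compose_linear)
qed

lemma fps_even_dilation:
  fixes q :: complex
  assumes "norm q < 1"
  defines "B \<equiv> Abs_fps (\<lambda>k. if even k then 1 / qpoch (q ^ 2) (q ^ 2) (k div 2) else 0)"
  shows "(1 - fps_X ^ 2) * B = B oo (fps_const q * fps_X)"
proof (rule fps_ext)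
  fix n
  have q2: "norm (q ^ 2) < 1"
    using assms(1) by (simp add: norm_power power_less_one_iff)
  have lhs: "fps_nth ((1 - fps_X ^ 2) * B) n = fps_nth B n - (if n < 2 then 0 else fps_nth B (n - 2))"
    by (simp add: left_diff_distrib fps_X_power_mult_nth)
  show "fps_nth ((1 - fps_X ^ 2) * B) n = fps_nth (B oo (fps_const q * fps_X)) n"
  proof (cases "n < 2")
    case True
    then have "n = 0 \<or> n = 1"
      by auto
    then show ?thesis
      unfolding lhs fps_compose_linear by (auto simp: B_def)
  next
    case False
    then obtain m where m: "n = Suc (Suc m)"
      by (metis add_2_eq_Suc le_Suc_ex not_less)
    show ?thesis
    proof (cases "even m")
      case True
      then obtain j where j: "m = 2 * j"
        by (auto elim: evenE)
      have "1 - q ^ 2 * (q ^ 2) ^ j \<noteq> 0" "qpoch (q ^ 2) (q ^ 2) j \<noteq> 0"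
        using qpoch_nonzero[of "q ^ 2" "q ^ 2" "Suc j"] q2 by (auto simp: qpoch_Suc)
      moreover have "q ^ n = q ^ 2 * (q ^ 2) ^ j"
        unfolding m j by (simp add: power_mult power2_eq_square)
      ultimately show ?thesis
        unfolding lhs fps_compose_linear using m j by (simp add: B_def qpoch_Suc field_simps)
    next
      case False
      with m show ?thesis
        unfolding lhs fps_compose_linear by (simp add: B_def)
    qed
  qed
qed

lemma sum_atMost_vanishing_odd:
  fixes f :: "nat \<Rightarrow> 'a::comm_monoid_add"
  assumes "\<And>k. odd k \<Longrightarrow> f k = 0"
  shows "(\<Sum>k\<le>n. f k) = (\<Sum>j\<le>n div 2. f (2 * j))"
proof -
  have "(\<Sum>k\<le>n. f k) = (\<Sum>k\<in>(\<lambda>j. 2 * j) ` {..n div 2}. f k)"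
  proof (rule sum.mono_neutral_right)
    show "\<forall>k\<in>{..n} - (\<lambda>j. 2 * j) ` {..n div 2}. f k = 0"
    proof
      fix k
      assume k: "k \<in> {..n} - (\<lambda>j. 2 * j) ` {..n div 2}"
      have "odd k"
      proof
        assume "even k"
        then have "k = 2 * (k div 2)"
          by simp
        moreover have "k div 2 \<in> {..n div 2}"
          using k by (auto intro: div_le_mono)
        ultimately show False
          using k by blast
      qed
      then show "f k = 0"
        by (rule assms)
    qed
  qed auto
  also have "\<dots> = (\<Sum>j\<le>n div 2. f (2 * j))"
    by (subst sum.reindex) (auto simp: inj_on_def)
  finally show ?thesis .
qed

theorem sum_qpoch_diagonal:
  fixes q :: complex
  assumes q: "norm q < 1"
  shows "(\<Sum>j\<le>n div 2. q ^ ((n - 2 * j) choose 2) / (qpoch q q (n - 2 * j) * qpoch (q ^ 2) (q ^ 2) j))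
    = 1 / qpoch q q n"
proof -
  define D where "D = fps_const q * fps_X"
  define A where "A = Abs_fps (\<lambda>i. q ^ (i choose 2) / qpoch q q i)"
  define B where "B = Abs_fps (\<lambda>k. if even k then 1 / qpoch (q ^ 2) (q ^ 2) (k div 2) else 0)"
  have "(1 - fps_X) * (B * A) = (1 - fps_X) * (1 + fps_X) * B * (A oo D)"
    using fps_euler_dilation[OF q] by (simp add: A_def D_def mult_ac)
  also have "(1 - fps_X) * (1 + fps_X) = (1 - fps_X ^ 2 :: complex fps)"
    by (simp add: algebra_simps power2_eq_square)
  also have "(1 - fps_X ^ 2) * B * (A oo D) = (B * A) oo D"
    using fps_even_dilation[OF q] by (simp add: B_def D_def fps_compose_mult_distrib)
  finally have "fps_nth (B * A) n * qpoch q q n = 1"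
    by (intro fps_coeff_from_dilation) (simp_all add: A_def B_def D_def binomial_eq_0)
  then have "fps_nth (B * A) n = 1 / qpoch q q n"
    using qpoch_nonzero[of q q n] q by (simp add: eq_divide_eq)
  moreover have "fps_nth (B * A) n
      = (\<Sum>j\<le>n div 2. q ^ ((n - 2 * j) choose 2) / (qpoch q q (n - 2 * j) * qpoch (q ^ 2) (q ^ 2) j))"
    unfolding fps_mult_nth atLeast0AtMost
    by (subst sum_atMost_vanishing_odd) (auto simp: A_def B_def mult.commute)
  ultimately show ?thesis
    by simp
qed

lemma summable_on_diagonal_family:
  fixes q :: complex and E :: "nat \<Rightarrow> complex"
  assumes q: "norm q < 1" and E: "\<And>n. norm (E n) \<le> norm q ^ n"
  shows "(\<lambda>(i, j). E (i + 2 * j) * q ^ (i choose 2) / (qpoch q q i * qpoch (q ^ 2) (q ^ 2) j))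
    summable_on UNIV"
proof -
  have q2: "norm (q ^ 2) < 1"
    using q by (simp add: norm_power power_less_one_iff)
  define c where "c = exp (norm q / (1 - norm q)\<^sup>2) * exp (norm (q ^ 2) / (1 - norm (q ^ 2))\<^sup>2)"
  have geom: "(\<lambda>i. q ^ i) summable_on UNIV"
    using q by (intro norm_summable_imp_summable_on) (simp add: norm_power)
  have "(\<lambda>(i, j). c * (q ^ i * q ^ j)) summable_on UNIV \<times> UNIV"
    using summable_on_cmult_right[OF summable_on_product_complex[OF geom geom]]
    by (simp add: case_prod_unfold)
  then have majorant: "(\<lambda>x. norm (case x of (i, j) \<Rightarrow> c * (q ^ i * q ^ j))) summable_on UNIV"
    by (simp add: summable_on_iff_abs_summable_on_complex)
  have bound: "norm (E (i + 2 * j) * q ^ (i choose 2) / (qpoch q q i * qpoch (q ^ 2) (q ^ 2) j))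
      \<le> norm (c * (q ^ i * q ^ j))" for i j
  proof -
    have "norm (E (i + 2 * j)) \<le> norm q ^ (i + j)"
      using E[of "i + 2 * j"] q power_decreasing[of "i + j" "i + 2 * j" "norm q"] by simp
    moreover have "norm (q ^ (i choose 2)) \<le> 1"
      using q by (simp add: norm_power power_le_one)
    moreover have "norm (E (i + 2 * j) * q ^ (i choose 2) / (qpoch q q i * qpoch (q ^ 2) (q ^ 2) j))
        = norm (E (i + 2 * j)) * norm (q ^ (i choose 2)) * norm (1 / qpoch q q i)
          * norm (1 / qpoch (q ^ 2) (q ^ 2) j)"
      by (simp add: norm_mult norm_divide)
    ultimately have "norm (E (i + 2 * j) * q ^ (i choose 2) / (qpoch q q i * qpoch (q ^ 2) (q ^ 2) j))
        \<le> norm q ^ (i + j) * 1 * exp (norm q / (1 - norm q)\<^sup>2)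
          * exp (norm (q ^ 2) / (1 - norm (q ^ 2))\<^sup>2)"
      using norm_inverse_qpoch_le[OF order_refl q, where n = i]
        norm_inverse_qpoch_le[OF order_refl q2, where n = j]
      by (simp only:) (intro mult_mono; simp)
    then show ?thesis
      by (simp add: c_def norm_mult norm_power power_add mult_ac)
  qed
  have "(\<lambda>x. norm (case x of (i, j) \<Rightarrow>
      E (i + 2 * j) * q ^ (i choose 2) / (qpoch q q i * qpoch (q ^ 2) (q ^ 2) j))) summable_on UNIV"
    by (rule Infinite_Sum.abs_summable_on_comparison_test'[OF majorant]) (auto simp: bound)
  then show ?thesis
    by (simp add: summable_on_iff_abs_summable_on_complex)
qed

theorem has_sum_diagonal_family:
  fixes q :: complex and E :: "nat \<Rightarrow> complex"
  assumes q: "norm q < 1" and E: "\<And>n. norm (E n) \<le> norm q ^ n"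
    and S: "(\<lambda>n. E n / qpoch q q n) sums S"
  shows "((\<lambda>(i, j). E (i + 2 * j) * q ^ (i choose 2) / (qpoch q q i * qpoch (q ^ 2) (q ^ 2) j))
    has_sum S) UNIV"
proof -
  define f where
    "f = (\<lambda>(i, j). E (i + 2 * j) * q ^ (i choose 2) / (qpoch q q i * qpoch (q ^ 2) (q ^ 2) j))"
  obtain T where T: "(f has_sum T) UNIV"
    using summable_on_diagonal_family[OF q E] unfolding f_def summable_on_def by blast
  have "((\<lambda>(n, j). f (n - 2 * j, j)) has_sum T) (SIGMA n:UNIV. {..n div 2})"
    using T by (subst has_sum_reindex_bij_witness[where i = "\<lambda>(i, j). (i + 2 * j, j)"
          and j = "\<lambda>(n, j). (n - 2 * j, j)"]) auto
  then have "((\<lambda>n. \<Sum>j\<le>n div 2. f (n - 2 * j, j)) has_sum T) UNIV"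
    by (rule has_sum_Sigma') (simp add: has_sum_finite)
  moreover have "(\<Sum>j\<le>n div 2. f (n - 2 * j, j)) = E n / qpoch q q n" for n
  proof -
    have "(\<Sum>j\<le>n div 2. f (n - 2 * j, j)) = E n * (\<Sum>j\<le>n div 2.
        q ^ ((n - 2 * j) choose 2) / (qpoch q q (n - 2 * j) * qpoch (q ^ 2) (q ^ 2) j))"
      unfolding sum_distrib_left by (intro sum.cong) (auto simp: f_def)
    then show ?thesis
      by (simp add: sum_qpoch_diagonal[OF q])
  qed
  ultimately have "((\<lambda>n. E n / qpoch q q n) has_sum T) UNIV"
    by simp
  moreover have "((\<lambda>n. E n / qpoch q q n) has_sum S) UNIV"
  proof (rule norm_summable_imp_has_sum[OF summable_norm_geometric_bound S])
    fix n
    have "norm (E n / qpoch q q n) = norm (E n) * norm (1 / qpoch q q n)"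
      by (simp add: norm_divide)
    also have "\<dots> \<le> norm q ^ n * exp (norm q / (1 - norm q)\<^sup>2)"
      using E[of n] norm_inverse_qpoch_le[OF order_refl q, where n = n] by (intro mult_mono) auto
    finally show "norm (E n / qpoch q q n) \<le> exp (norm q / (1 - norm q)\<^sup>2) * norm q ^ n"
      by (simp add: mult.commute)
  qed (use q in auto)
  ultimately have "T = S"
    by (rule has_sum_unique)
  with T show ?thesis
    by (simp add: f_def)
qed

lemma exponent_identity_1:
  "i * (3 * i - 1) div 2 + 4 * i * j + 4 * j ^ 2 = (i + 2 * j)\<^sup>2 + (i choose 2)"
proof -
  have "i * (3 * i - 1) = 2 * i\<^sup>2 + 2 * (i choose 2)"
    by (cases i) (auto simp: choose_two power2_eq_square algebra_simps)
  then show ?thesis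
    by (simp add: power2_eq_square algebra_simps)
qed

lemma exponent_identity_2:
  "i * (3 * i + 1) div 2 + 4 * i * j + 4 * j ^ 2 + 2 * j = (i + 2 * j)\<^sup>2 + (i + 2 * j) + (i choose 2)"
proof -
  have "i * (3 * i + 1) = 2 * i\<^sup>2 + 2 * i + 2 * (i choose 2)"
    by (cases i) (auto simp: choose_two power2_eq_square algebra_simps)
  then show ?thesis
    by (simp add: power2_eq_square algebra_simps)
qed

theorem theorem3p4:
  fixes q :: complex
  assumes "norm q < 1"
  shows "((\<lambda>(i::nat, j::nat). q ^ (i * (3 * i - 1) div 2 + 4 * i * j + 4 * j ^ 2)
            / (qpoch q q i * qpoch (q ^ 2) (q ^ 2) j))
          has_sum (1 / (qpoch_inf q (q ^ 5) * qpoch_inf (q ^ 4) (q ^ 5)))) UNIV \<and>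
         ((\<lambda>(i::nat, j::nat). q ^ (i * (3 * i + 1) div 2 + 4 * i * j + 4 * j ^ 2 + 2 * j)
            / (qpoch q q i * qpoch (q ^ 2) (q ^ 2) j))
          has_sum (1 / (qpoch_inf (q ^ 2) (q ^ 5) * qpoch_inf (q ^ 3) (q ^ 5)))) UNIV"
proof
  have "norm (q ^ n\<^sup>2) \<le> norm q ^ n" "norm (q ^ (n\<^sup>2 + n)) \<le> norm q ^ n" for n
    using assms by (auto simp: norm_power power2_eq_square intro!: power_decreasing)
  note diagonal = has_sum_diagonal_family[OF assms this(1) rogers_ramanujan_1[OF assms]]
    has_sum_diagonal_family[OF assms this(2) rogers_ramanujan_2[OF assms]]
  show "((\<lambda>(i::nat, j::nat). q ^ (i * (3 * i - 1) div 2 + 4 * i * j + 4 * j ^ 2)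
      / (qpoch q q i * qpoch (q ^ 2) (q ^ 2) j))
    has_sum (1 / (qpoch_inf q (q ^ 5) * qpoch_inf (q ^ 4) (q ^ 5)))) UNIV"
    using diagonal(1) unfolding exponent_identity_1 power_add by simp
  show "((\<lambda>(i::nat, j::nat). q ^ (i * (3 * i + 1) div 2 + 4 * i * j + 4 * j ^ 2 + 2 * j)
      / (qpoch q q i * qpoch (q ^ 2) (q ^ 2) j))
    has_sum (1 / (qpoch_inf (q ^ 2) (q ^ 5) * qpoch_inf (q ^ 3) (q ^ 5)))) UNIV"
    using diagonal(2) unfolding exponent_identity_2 power_add by simp
qed

end
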